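(* For every nonnegative integer $n$, the bistatistic $(\operatorname{asc}, \operatorname{rlm})$ has the same distribution over $\mathcal{A}_n(021)$ as over $S_n(132)$; that is, for all nonnegative integers $a, r$, $$\#\{x \in \mathcal{A}_n(021) : \operatorname{asc}(x) = a,\ \operatorname{rlm}(x) = r\} = \#\{\pi \in S_n(132) : \operatorname{asc}(\pi) = a,\ \operatorname{rlm}(\pi) = r\}.$$
   Context: For a sequence $x = x_1 x_2 \ldots x_n$ of nonnegative integers, an index $i$ with $1 \le i < n$ is an ascent if $x_i < x_{i+1}$, and $\operatorname{asc}(x)$ denotes the number of ascents of $x$. A right-to-left minimum of $x$ is an index $i$ such that $x_i < x_j$ for all $j > i$; $\operatorname{rlm}(x)$ denotes the number of right-to-left minima. Both statistics are applied to permutations viewed as sequences $\pi_1 \pi_2 \ldots \pi_n$. An ascent sequence of length $n$ is a sequence $x_1 \ldots x_n$ of nonnegative integers with $x_1 = 0$ (when $n \ge 1$) and $x_i \le \operatorname{asc}(x_1 \ldots x_{i-1}) + 1$ for all $1 < i \le n$. The empty sequence is the unique ascent sequence of length $0$. A sequence contains the pattern $021$ if it has entries $x_{i_1}, x_{i_2}, x_{i_3}$ with $i_1 < i_2 < i_3$ and $x_{i_1} < x_{i_3} < x_{i_2}$; otherwise it avoids $021$. $\mathcal{A}_n(021)$ is the set of ascent sequences of length $n$ that avoid $021$. $S_n$ is the set of permutations of $\{1, \ldots, n\}$. A permutation $\pi$ contains $132$ if there are indices $i < j < k$ with $\pi_i < \pi_k < \pi_j$; $S_n(132)$ is the set of permutations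 in $S_n$ avoiding $132$. *)

theory Defs
  imports Main
begin

text \<open>Sequences are lists of naturals; list index i (0-based) corresponds to position i+1.\<close>

definition asc :: "nat list \<Rightarrow> nat" where
  "asc x = card {i. Suc i < length x \<and> x ! i < x ! Suc i}"

definition rlm :: "nat list \<Rightarrow> nat" where
  "rlm x = card {i. i < length x \<and> (\<forall>j. i < j \<and> j < length x \<longrightarrow> x ! i < x ! j)}"

definition is_ascent_seq :: "nat list \<Rightarrow> bool" where
  "is_ascent_seq x \<longleftrightarrow>
     (x \<noteq> [] \<longrightarrow> x ! 0 = 0) \<and>
     (\<forall>i. 0 < i \<and> i < length x \<longrightarrow> x ! i \<le> asc (take i x) + 1)"

definition contains_021 :: "nat list \<Rightarrow> bool" where
  "contains_021 x \<longleftrightarrow> (\<exists>i j k. i < j \<and> j < k \<and> k < length x \<and>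
      x ! i < x ! k \<and> x ! k < x ! j)"

definition ascent_seqs_avoid_021 :: "nat \<Rightarrow> nat list set" where
  "ascent_seqs_avoid_021 n = {x. length x = n \<and> is_ascent_seq x \<and> \<not> contains_021 x}"

definition perms :: "nat \<Rightarrow> nat list set" where
  "perms n = {p. length p = n \<and> distinct p \<and> set p = {1..n}}"

definition contains_132 :: "nat list \<Rightarrow> bool" where
  "contains_132 p \<longleftrightarrow> (\<exists>i j k. i < j \<and> j < k \<and> k < length p \<and>
      p ! i < p ! k \<and> p ! k < p ! j)"

definition perms_avoid_132 :: "nat \<Rightarrow> nat list set" where
  "perms_avoid_132 n = {p \<in> perms n. \<not> contains_132 p}"

end

theory Submission
  imports Defs
begin

text \<open>
  Both families are in bijection with binary trees so that size, ascents and right-to-left minima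
  correspond. A 132-avoiding permutation of length n+1 splits around its last entry l as
  (Q raised by l) P l, where P is a 132-avoiding permutation of 1..l-1 and Q one of 1..n+1-l;
  its ascents are those of Q and P plus one if P is nonempty, and its right-to-left minima are
  those of P plus one. A 021-avoiding ascent sequence is exactly one that starts with 0 and grows
  by 0 or by a value between its current maximum and its number of ascents plus one. Cutting it
  into maximal runs "v...v 0...0" gives a segment list, and segment lists admit a decomposition
  with the same recursive behaviour of the statistics: split at the last zero that is directly
  followed by a value of maximal size, and transform the unsplittable remainder bijectively into
  an arbitrary shorter sequence.
\<close>

lemma card_Collect_bij_betw:
  assumes "bij_betw f A B"
  shows "card {x \<in> A. P (f x)} = card {y \<in> B. P y}"
proof -
  have "bij_betw f {x \<in> A. P (f x)} {y \<in> B. P y}"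
    using assms unfolding bij_betw_def inj_on_def by auto
  then show ?thesis by (rule bij_betw_same_card)
qed

section \<open>Ascents and right-to-left minima of lists\<close>

lemma asc_Nil[simp]: "asc [] = 0" by (simp add: asc_def)
lemma rlm_Nil[simp]: "rlm [] = 0" by (simp add: rlm_def)

lemma card_Collect_nat_Suc:
  assumes "finite {i. P i}"
  shows "card {i::nat. P i} = (if P 0 then 1 else 0) + card {i. P (Suc i)}"
proof -
  have split: "{i. P i} = {i. i = 0 \<and> P 0} \<union> Suc ` {i. P (Suc i)}"
    by (auto simp: image_iff) (metis not0_implies_Suc)+
  have "finite {i. P (Suc i)}"
    using finite_vimageI[OF assms inj_Suc] by (simp add: vimage_def)
  then show ?thesis
    by (subst split, subst card_Un_disjoint) (auto simp: card_image)
qed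

lemma all_between_Suc_iff:
  "(\<forall>j. i < j \<and> j < Suc n \<longrightarrow> P j) \<longleftrightarrow> (\<forall>j. i \<le> j \<and> j < n \<longrightarrow> P (Suc j))"
proof
  assume "\<forall>j. i \<le> j \<and> j < n \<longrightarrow> P (Suc j)"
  then show "\<forall>j. i < j \<and> j < Suc n \<longrightarrow> P j"
    by (metis Suc_less_eq less_Suc_eq_le gr0_implies_Suc le0 le_less_trans)
qed (simp add: less_Suc_eq_le)

lemma asc_Cons: "asc (a # ys) = (if ys \<noteq> [] \<and> a < hd ys then 1 else 0) + asc ys"
  unfolding asc_def
  by (subst card_Collect_nat_Suc) (auto simp: hd_conv_nth intro: finite_subset[of _ "{..<length ys}"])

lemma rlm_Cons: "rlm (a # ys) = (if \<forall>y\<in>set ys. a < y then 1 else 0) + rlm ys"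
  unfolding rlm_def
  by (subst card_Collect_nat_Suc)
    (auto simp: all_set_conv_all_nth all_between_Suc_iff Suc_le_eq intro: finite_subset[of _ "{..<Suc (length ys)}"])

lemma asc_single[simp]: "asc [a] = 0" by (simp add: asc_Cons)
lemma rlm_single[simp]: "rlm [a] = 1" by (simp add: rlm_Cons)

lemma asc_append:
  "asc (xs @ ys) = asc xs + asc ys + (if xs \<noteq> [] \<and> ys \<noteq> [] \<and> last xs < hd ys then 1 else 0)"
proof (induction xs)
  case Nil then show ?case by simp
next
  case (Cons a xs)
  then show ?case by (cases xs) (auto simp: asc_Cons)
qed

lemma rlm_append_ge: "(\<forall>x\<in>set xs. \<exists>y\<in>set ys. y \<le> x) \<Longrightarrow> rlm (xs @ ys) = rlm ys"
proof (induction xs)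
  case Nil then show ?case by simp
next
  case (Cons a xs)
  then obtain y where "y \<in> set ys" "y \<le> a" by auto
  then have "\<not> (\<forall>z\<in>set (xs @ ys). a < z)" by (metis leD set_append Un_iff)
  then show ?case using Cons by (simp add: rlm_Cons)
qed

lemma rlm_append_lt: "(\<forall>x\<in>set xs. \<forall>y\<in>set ys. x < y) \<Longrightarrow> rlm (xs @ ys) = rlm xs + rlm ys"
proof (induction xs)
  case Nil then show ?case by simp
next
  case (Cons a xs)
  then have "(\<forall>z\<in>set (xs @ ys). a < z) = (\<forall>z\<in>set xs. a < z)" by auto
  then show ?case using Cons by (simp add: rlm_Cons)
qed

lemma rlm_append_last:
  "xs \<noteq> [] \<Longrightarrow> (\<forall>y\<in>set ys. last xs < y) \<Longrightarrow> rlm (xs @ ys) = rlm xs + rlm ys"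
proof (induction xs)
  case Nil then show ?case by simp
next
  case (Cons a xs)
  show ?case
  proof (cases "xs = []")
    case True then show ?thesis using Cons.prems by (simp add: rlm_Cons)
  next
    case False
    have IH: "rlm (xs @ ys) = rlm xs + rlm ys" using Cons.IH False Cons.prems by simp
    have "(\<forall>z\<in>set (xs @ ys). a < z) \<longleftrightarrow> (\<forall>z\<in>set xs. a < z)"
    proof
      assume "\<forall>z\<in>set xs. a < z"
      then have "a < last xs" using False by simp
      then show "\<forall>z\<in>set (xs @ ys). a < z" using \<open>\<forall>z\<in>set xs. a < z\<close> Cons.prems False by fastforce
    qed auto
    then show ?thesis using IH by (simp add: rlm_Cons)
  qed
qed

lemma rlm_snoc_0: "rlm (ys @ [0]) = 1"
proof -
  have "rlm (ys @ [0]) = rlm [0]" by (rule rlm_append_ge) auto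
  then show ?thesis by simp
qed

lemma asc_replicate[simp]: "asc (replicate n v) = 0"
  by (induction n) (auto simp: asc_Cons)

lemma rlm_replicate[simp]: "rlm (replicate (Suc n) v) = 1"
  by (induction n) (auto simp: rlm_Cons)

lemma asc_Cons_replicate[simp]: "asc (a # replicate n a) = 0"
  using asc_replicate[of "Suc n" a] by simp
lemma rlm_Cons_replicate[simp]: "rlm (a # replicate n a) = 1"
  using rlm_replicate[of n a] by simp

lemma asc_append_replicate_last: "y \<noteq> [] \<Longrightarrow> last y = v \<Longrightarrow> asc (y @ replicate s v) = asc y"
  by (cases s) (auto simp: asc_append)

definition shift :: "nat \<Rightarrow> nat list \<Rightarrow> nat list" where
  "shift c xs = map (\<lambda>v. v + c) xs"

lemma shift_simps[simp]: "shift c [] = []" "shift c (a # xs) = (a + c) # shift c xs"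
  "shift c (xs @ ys) = shift c xs @ shift c ys" "length (shift c xs) = length xs"
  "shift c xs = [] \<longleftrightarrow> xs = []"
  by (auto simp: shift_def)

lemma set_shift: "set (shift c xs) = (\<lambda>v. v + c) ` set xs" by (simp add: shift_def)
lemma distinct_shift[simp]: "distinct (shift c xs) = distinct xs" by (simp add: shift_def distinct_map)
lemma last_shift: "xs \<noteq> [] \<Longrightarrow> last (shift c xs) = last xs + c" by (simp add: shift_def last_map)
lemma shift_inj: "shift c xs = shift c ys \<Longrightarrow> xs = ys" by (simp add: shift_def inj_map_eq_map inj_def)

lemma asc_shift[simp]: "asc (shift c xs) = asc xs"
  unfolding shift_def by (induction xs) (auto simp: asc_Cons hd_map)

lemma rlm_shift[simp]: "rlm (shift c xs) = rlm xs"
  unfolding shift_def by (induction xs) (auto simp: rlm_Cons)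

lemma shift_map_diff: "\<forall>x\<in>set xs. (l::nat) \<le> x \<Longrightarrow> shift l (map (\<lambda>v. v - l) xs) = xs"
  unfolding shift_def by (induction xs) auto

section \<open>Pattern containment\<close>

lemma contains_021_iff_132: "contains_021 x = contains_132 x"
  by (simp add: contains_021_def contains_132_def)

lemma contains_132_append_left: "contains_132 xs \<Longrightarrow> contains_132 (xs @ ys)"
proof -
  assume "contains_132 xs"
  then obtain i j k where "i < j" "j < k" "k < length xs" "xs ! i < xs ! k" "xs ! k < xs ! j"
    unfolding contains_132_def by blast
  then show ?thesis unfolding contains_132_def
    by (intro exI[of _ i] exI[of _ j] exI[of _ k]) (auto simp: nth_append)
qed

lemma contains_132_append_right: "contains_132 ys \<Longrightarrow> contains_132 (xs @ ys)"
proof -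
  assume "contains_132 ys"
  then obtain i j k where "i < j" "j < k" "k < length ys" "ys ! i < ys ! k" "ys ! k < ys ! j"
    unfolding contains_132_def by blast
  then show ?thesis unfolding contains_132_def
    by (intro exI[of _ "length xs + i"] exI[of _ "length xs + j"] exI[of _ "length xs + k"])
      (auto simp: nth_append)
qed

lemma contains_132_shift[simp]: "contains_132 (shift c xs) = contains_132 xs"
proof -
  have "(i < j \<and> j < k \<and> k < length xs \<and> shift c xs ! i < shift c xs ! k \<and> shift c xs ! k < shift c xs ! j)
      \<longleftrightarrow> (i < j \<and> j < k \<and> k < length xs \<and> xs ! i < xs ! k \<and> xs ! k < xs ! j)" for i j k
    by (auto simp: shift_def)
  then show ?thesis unfolding contains_132_def by simp
qed

lemma contains_132_snoc_max:
  "(\<forall>x\<in>set xs. x < m) \<Longrightarrow> contains_132 (xs @ [m]) \<Longrightarrow> contains_132 xs"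
  unfolding contains_132_def
proof (elim exE conjE)
  fix i j k assume H: "\<forall>x\<in>set xs. x < m" "i < j" "j < k" "k < length (xs @ [m])"
    "(xs @ [m]) ! i < (xs @ [m]) ! k" "(xs @ [m]) ! k < (xs @ [m]) ! j"
  show "\<exists>i j k. i < j \<and> j < k \<and> k < length xs \<and> xs ! i < xs ! k \<and> xs ! k < xs ! j"
  proof (cases "k = length xs")
    case True
    have "j < length xs" using H True by simp
    then have "xs ! j < m" using H nth_mem[of j xs] by auto
    moreover have "m < xs ! j" using H True \<open>j < length xs\<close> by (simp add: nth_append)
    ultimately show ?thesis by simp
  next
    case False
    then show ?thesis using H by (intro exI[of _ i] exI[of _ j] exI[of _ k]) (auto simp: nth_append)
  qed
qed

lemma contains_132_Cons:
  "contains_132 (a # xs) \<longleftrightarrow> contains_132 xs \<or> (\<exists>j k. j < k \<and> k < length xs \<and> a < xs!k \<and> xs!k < xs!j)"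
proof
  assume "contains_132 (a # xs)"
  then obtain i j k where H: "i < j" "j < k" "k < length (a#xs)" "(a#xs)!i < (a#xs)!k" "(a#xs)!k < (a#xs)!j"
    unfolding contains_132_def by blast
  show "contains_132 xs \<or> (\<exists>j k. j < k \<and> k < length xs \<and> a < xs!k \<and> xs!k < xs!j)"
  proof (cases i)
    case 0
    then show ?thesis using H by (intro disjI2 exI[of _ "j - 1"] exI[of _ "k - 1"]) (cases j; cases k; auto)
  next
    case (Suc i')
    then show ?thesis using H unfolding contains_132_def
      by (intro disjI1 exI[of _ i'] exI[of _ "j - 1"] exI[of _ "k - 1"]) (cases j; cases k; auto)
  qed
next
  assume "contains_132 xs \<or> (\<exists>j k. j < k \<and> k < length xs \<and> a < xs!k \<and> xs!k < xs!j)"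
  then show "contains_132 (a # xs)"
  proof
    assume "contains_132 xs" then show ?thesis using contains_132_append_right[of xs "[a]"] by simp
  next
    assume "\<exists>j k. j < k \<and> k < length xs \<and> a < xs!k \<and> xs!k < xs!j"
    then obtain j k where "j < k" "k < length xs" "a < xs!k" "xs!k < xs!j" by blast
    then show ?thesis unfolding contains_132_def
      by (intro exI[of _ 0] exI[of _ "Suc j"] exI[of _ "Suc k"]) auto
  qed
qed

lemma contains_132_append_greater:
  "(\<forall>a\<in>set A. \<forall>c\<in>set C. c < a) \<Longrightarrow> contains_132 (A @ C) \<Longrightarrow> contains_132 A \<or> contains_132 C"
proof (induction A)
  case Nil then show ?case by simp
next
  case (Cons a A)
  from Cons.prems(2) have "contains_132 (A @ C) \<or> (\<exists>j k. j < k \<and> k < length (A @ C) \<and> a < (A@C)!k \<and> (A@C)!k < (A@C)!j)"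
    by (simp add: contains_132_Cons)
  then show ?case
  proof
    assume "contains_132 (A @ C)"
    then have "contains_132 A \<or> contains_132 C" using Cons by auto
    then show ?thesis by (auto simp: contains_132_Cons)
  next
    assume "\<exists>j k. j < k \<and> k < length (A @ C) \<and> a < (A@C)!k \<and> (A@C)!k < (A@C)!j"
    then obtain j k where H: "j < k" "k < length (A @ C)" "a < (A@C)!k" "(A@C)!k < (A@C)!j" by blast
    have "k < length A"
    proof (rule ccontr)
      assume "\<not> k < length A"
      then have "(A@C)!k \<in> set C" using H by (auto simp: nth_append)
      then show False using H Cons.prems(1) by fastforce
    qed
    then have "contains_132 (a # A)" using H by (auto simp: contains_132_Cons nth_append)
    then show ?thesis by simp
  qed
qed

section \<open>132-avoiding permutations split at their last entry\<close>

definition compose_perm :: "nat list \<Rightarrow> nat list \<Rightarrow> nat list" where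
  "compose_perm Q P = shift (Suc (length P)) Q @ P @ [Suc (length P)]"

lemma compose_perm_perms:
  assumes "Q \<in> perms i" "P \<in> perms j"
  shows "compose_perm Q P \<in> perms (i + j + 1)"
proof -
  have lQ: "length Q = i" and dQ: "distinct Q" and sQ: "set Q = {1..i}"
    and lP: "length P = j" and dP: "distinct P" and sP: "set P = {1..j}"
    using assms by (auto simp: perms_def)
  have s1: "set (shift (Suc j) Q) = {j+2..i+j+1}"
  proof -
    have "(\<lambda>v. v + Suc j) ` {1..i} = {1 + Suc j..i + Suc j}" by (rule image_add_atLeastAtMost')
    also have "\<dots> = {j+2..i+j+1}" by simp
    finally show ?thesis using sQ by (simp add: set_shift)
  qed
  have "distinct (shift (Suc j) Q)" using dQ by simp
  moreover have "set (shift (Suc j) Q) \<inter> set (P @ [Suc j]) = {}" using s1 sP by auto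
  moreover have "distinct (P @ [Suc j])" using dP sP by auto
  ultimately have "distinct (compose_perm Q P)" by (simp add: compose_perm_def lP)
  moreover have "set (compose_perm Q P) = {1..i+j+1}" unfolding compose_perm_def using s1 sP lP by auto
  moreover have "length (compose_perm Q P) = i + j + 1" using lQ lP by (simp add: compose_perm_def)
  ultimately show ?thesis by (simp add: perms_def)
qed

lemma compose_perm_avoids:
  assumes "Q \<in> perms i" "P \<in> perms j" "\<not> contains_132 Q" "\<not> contains_132 P"
  shows "\<not> contains_132 (compose_perm Q P)"
proof
  assume c: "contains_132 (compose_perm Q P)"
  have lP: "length P = j" and sP: "set P = {1..j}" using assms by (auto simp: perms_def)
  have sQ: "set Q = {1..i}" using assms by (auto simp: perms_def)
  have "\<forall>a\<in>set (shift (Suc j) Q). \<forall>c\<in>set (P @ [Suc j]). c < a"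
    using sP lP sQ by (auto simp: set_shift)
  moreover have "contains_132 (shift (Suc j) Q @ (P @ [Suc j]))" using c by (simp add: compose_perm_def lP)
  ultimately have "contains_132 (shift (Suc j) Q) \<or> contains_132 (P @ [Suc j])"
    by (rule contains_132_append_greater)
  moreover have "\<forall>x\<in>set P. x < Suc j" using sP lP by auto
  ultimately show False using assms contains_132_snoc_max by auto
qed

lemma asc_compose_perm:
  assumes "P \<in> perms j"
  shows "asc (compose_perm Q P) = asc Q + asc P + (if P = [] then 0 else 1)"
proof -
  have lP: "length P = j" and sP: "set P = {1..j}" using assms by (auto simp: perms_def)
  have a1: "asc (P @ [Suc j]) = asc P + (if P = [] then 0 else 1)"
  proof (cases "P = []")
    case False
    then have "last P \<in> set P" by simp
    then have "last P < Suc j" using sP by auto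
    then show ?thesis using False by (simp add: asc_append)
  qed simp
  have a2: "\<not> (shift (Suc j) Q \<noteq> [] \<and> last (shift (Suc j) Q) < hd (P @ [Suc j]))"
  proof
    assume H: "shift (Suc j) Q \<noteq> [] \<and> last (shift (Suc j) Q) < hd (P @ [Suc j])"
    have "hd (P @ [Suc j]) \<le> Suc j"
    proof (cases P)
      case (Cons a list)
      then have "a \<in> set P" by simp
      then have "a \<in> {1..j}" using sP by simp
      then show ?thesis using Cons by simp
    qed simp
    moreover have "last (shift (Suc j) Q) \<ge> Suc j" using H by (simp add: last_shift)
    ultimately show False using H by simp
  qed
  have "asc (compose_perm Q P) = asc (shift (Suc j) Q) + asc (P @ [Suc j])"
    unfolding compose_perm_def lP using a2 by (simp only: asc_append) simp
  then show ?thesis using a1 by simp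
qed

lemma rlm_compose_perm:
  assumes "P \<in> perms j"
  shows "rlm (compose_perm Q P) = rlm P + 1"
proof -
  have lP: "length P = j" and sP: "set P = {1..j}" using assms by (auto simp: perms_def)
  have "rlm (shift (Suc j) Q @ P @ [Suc j]) = rlm (P @ [Suc j])"
    by (rule rlm_append_ge) (auto simp: set_shift)
  also have "\<dots> = rlm P + rlm [Suc j]" by (rule rlm_append_lt) (use sP in auto)
  finally show ?thesis unfolding compose_perm_def lP by simp
qed

lemma compose_perm_inject:
  assumes "compose_perm Q1 P1 = compose_perm Q2 P2" shows "Q1 = Q2 \<and> P1 = P2"
proof -
  have l: "length P1 = length P2" using arg_cong[OF assms, of last] by (simp add: compose_perm_def)
  have "length Q1 = length Q2" using arg_cong[OF assms, of length] l by (simp add: compose_perm_def)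
  then have "shift (Suc (length P1)) Q1 = shift (Suc (length P1)) Q2 \<and> P1 @ [Suc (length P1)] = P2 @ [Suc (length P1)]"
    using assms l by (simp add: compose_perm_def)
  then show ?thesis using shift_inj by blast
qed

lemma filter_greater_append_less:
  "(\<forall>i j. i < j \<longrightarrow> j < length xs \<longrightarrow> \<not> (xs!i < l \<and> l < xs!j)) \<Longrightarrow> l \<notin> set xs \<Longrightarrow>
   xs = filter (\<lambda>v. l < v) xs @ filter (\<lambda>v. v < (l::nat)) xs"
proof (induction xs)
  case Nil then show ?case by simp
next
  case (Cons a xs)
  have H: "\<forall>i j. i < j \<longrightarrow> j < length xs \<longrightarrow> \<not> (xs!i < l \<and> l < xs!j)"
  proof (intro allI impI)
    fix i j assume "i < j" "j < length xs"
    then show "\<not> (xs!i < l \<and> l < xs!j)" using Cons.prems(1)[rule_format, of "Suc i" "Suc j"] by simp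
  qed
  show ?case
  proof (cases "l < a")
    case True
    then have "filter (\<lambda>v. l < v) (a#xs) = a # filter (\<lambda>v. l < v) xs"
      "filter (\<lambda>v. v < l) (a#xs) = filter (\<lambda>v. v < l) xs" by auto
    then show ?thesis using Cons.IH[OF H] Cons.prems by simp
  next
    case False
    then have al: "a < l" using Cons.prems(2) by simp
    have "\<forall>x\<in>set xs. x < l"
    proof
      fix x assume "x \<in> set xs"
      then obtain k where k: "k < length xs" "xs!k = x" by (auto simp: in_set_conv_nth)
      then have "\<not> (l < x)" using Cons.prems(1)[rule_format, of 0 "Suc k"] al by simp
      moreover have "x \<noteq> l" using Cons.prems(2) \<open>x \<in> set xs\<close> by auto
      ultimately show "x < l" by simp
    qed
    then have "filter (\<lambda>v. l < v) xs = []" "filter (\<lambda>v. v < l) xs = xs"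
      by (auto simp: filter_empty_conv)
    then show ?thesis using al by simp
  qed
qed

lemma distinct_in_perms: "distinct xs \<Longrightarrow> set xs = {1..k} \<Longrightarrow> xs \<in> perms k"
  using distinct_card[of xs] by (simp add: perms_def)

lemma no_132_snoc_separates:
  assumes "\<not> contains_132 (xs @ [l])"
  shows "\<forall>i j. i < j \<longrightarrow> j < length xs \<longrightarrow> \<not> (xs!i < l \<and> l < xs!j)"
proof (intro allI impI notI)
  fix i j assume "i < j" "j < length xs" "xs!i < l \<and> l < xs!j"
  then have "contains_132 (xs @ [l])" unfolding contains_132_def
    by (intro exI[of _ i] exI[of _ j] exI[of _ "length xs"]) (auto simp: nth_append)
  with assms show False by contradiction
qed

lemma compose_perm_surj:
  assumes "p \<in> perms (Suc m)" "\<not> contains_132 p"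
  obtains Q P where "Q \<in> perms (length Q)" "P \<in> perms (length P)" "length Q + length P = m"
    "\<not> contains_132 Q" "\<not> contains_132 P" "p = compose_perm Q P"
proof -
  define l B where "l = last p" and "B = butlast p"
  have "p \<noteq> []" using assms(1) by (auto simp: perms_def)
  then have p: "p = B @ [l]" unfolding B_def l_def by simp
  have B: "distinct B" "set B = {1..Suc m} - {l}" "l \<notin> set B" and l: "1 \<le> l" "l \<le> Suc m"
    using assms(1) unfolding p perms_def by auto
  define P where "P = filter (\<lambda>v. v < l) B"
  define Q where "Q = map (\<lambda>v. v - l) (filter (\<lambda>v. l < v) B)"
  have shift_Q: "shift l Q = filter (\<lambda>v. l < v) B"
    unfolding Q_def by (rule shift_map_diff) simp
  have p_split: "p = shift l Q @ P @ [l]"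
    using filter_greater_append_less[OF no_132_snoc_separates B(3)] assms(2)
    unfolding p shift_Q P_def by simp
  have "distinct P" using B(1) by (simp add: P_def)
  moreover have "set P = {1..l - 1}"
    using B(2) l(2) by (simp add: P_def set_eq_iff) arith
  ultimately have P: "P \<in> perms (l - 1)" by (rule distinct_in_perms)
  have "(\<lambda>v. v + l) ` set Q = set (filter (\<lambda>v. l < v) B)"
    by (simp add: shift_Q flip: set_shift)
  also have "\<dots> = {l + 1..Suc m}"
    using B(2) by (simp add: set_eq_iff) arith
  also have "\<dots> = (\<lambda>v. v + l) ` {1..Suc m - l}"
    using l(2) by simp
  finally have "set Q = {1..Suc m - l}"
    by (simp only: inj_image_eq_iff inj_on_add')
  have "distinct Q"
    using B(1) distinct_shift[of l Q] by (simp add: shift_Q)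
  then have Q: "Q \<in> perms (Suc m - l)" using \<open>set Q = _\<close> by (rule distinct_in_perms)
  have "\<not> contains_132 Q"
    using assms(2) contains_132_append_left[of "shift l Q" "P @ [l]"] p_split by auto
  moreover have "\<not> contains_132 P"
    using assms(2) contains_132_append_left[of P "[l]"] contains_132_append_right[of "P @ [l]" "shift l Q"]
      p_split by auto
  moreover have "length P = l - 1" "length Q = Suc m - l"
    using P Q by (simp_all add: perms_def)
  moreover have "p = compose_perm Q P"
    using p_split l \<open>length P = l - 1\<close> by (simp add: compose_perm_def)
  ultimately show thesis
    by (intro that[of Q P]) (use P Q l in \<open>auto simp: perms_def\<close>)
qed

section \<open>021-avoiding ascent sequences\<close>

definition asc_seq_021 :: "nat list \<Rightarrow> bool" where
  "asc_seq_021 x \<longleftrightarrow> is_ascent_seq x \<and> \<not> contains_021 x"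

lemma ascent_seqs_avoid_021_eq: "ascent_seqs_avoid_021 n = {x. length x = n \<and> asc_seq_021 x}"
  by (auto simp: ascent_seqs_avoid_021_def asc_seq_021_def)

lemma is_ascent_seq_snoc:
  "is_ascent_seq (xs @ [v]) \<longleftrightarrow> is_ascent_seq xs \<and> (xs = [] \<longrightarrow> v = 0) \<and> (xs \<noteq> [] \<longrightarrow> v \<le> asc xs + 1)"
proof -
  have A: "(xs @ [v] \<noteq> [] \<longrightarrow> (xs @ [v]) ! 0 = 0) \<longleftrightarrow> (xs \<noteq> [] \<longrightarrow> xs ! 0 = 0) \<and> (xs = [] \<longrightarrow> v = 0)"
    by (cases xs) auto
  have B: "(\<forall>i. 0 < i \<and> i < length (xs @ [v]) \<longrightarrow> (xs @ [v]) ! i \<le> asc (take i (xs @ [v])) + 1) \<longleftrightarrow>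
      (\<forall>i. 0 < i \<and> i < length xs \<longrightarrow> xs ! i \<le> asc (take i xs) + 1) \<and> (xs \<noteq> [] \<longrightarrow> v \<le> asc xs + 1)"
  proof
    assume H: "\<forall>i. 0 < i \<and> i < length (xs @ [v]) \<longrightarrow> (xs @ [v]) ! i \<le> asc (take i (xs @ [v])) + 1"
    show "(\<forall>i. 0 < i \<and> i < length xs \<longrightarrow> xs ! i \<le> asc (take i xs) + 1) \<and> (xs \<noteq> [] \<longrightarrow> v \<le> asc xs + 1)"
    proof (intro conjI allI impI)
      fix i assume "0 < i \<and> i < length xs"
      then show "xs ! i \<le> asc (take i xs) + 1" using H[rule_format, of i] by (simp add: nth_append)
    next
      assume "xs \<noteq> []"
      then show "v \<le> asc xs + 1" using H[rule_format, of "length xs"] by simp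
    qed
  next
    assume H: "(\<forall>i. 0 < i \<and> i < length xs \<longrightarrow> xs ! i \<le> asc (take i xs) + 1) \<and> (xs \<noteq> [] \<longrightarrow> v \<le> asc xs + 1)"
    show "\<forall>i. 0 < i \<and> i < length (xs @ [v]) \<longrightarrow> (xs @ [v]) ! i \<le> asc (take i (xs @ [v])) + 1"
    proof (intro allI impI)
      fix i assume i: "0 < i \<and> i < length (xs @ [v])"
      show "(xs @ [v]) ! i \<le> asc (take i (xs @ [v])) + 1"
      proof (cases "i < length xs")
        case True then show ?thesis using H i by (simp add: nth_append)
      next
        case False
        then have "i = length xs" using i by simp
        then show ?thesis using H i by auto
      qed
    qed
  qed
  show ?thesis unfolding is_ascent_seq_def using A B by (auto simp: nth_append)
qed

lemma contains_021_snoc: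
  "contains_021 (xs @ [v]) \<longleftrightarrow> contains_021 xs \<or> (\<exists>i j. i < j \<and> j < length xs \<and> xs!i < v \<and> v < xs!j)"
proof
  assume "contains_021 (xs @ [v])"
  then obtain i j k where H: "i < j" "j < k" "k < length (xs @ [v])" "(xs@[v])!i < (xs@[v])!k" "(xs@[v])!k < (xs@[v])!j"
    unfolding contains_021_def by blast
  show "contains_021 xs \<or> (\<exists>i j. i < j \<and> j < length xs \<and> xs!i < v \<and> v < xs!j)"
  proof (cases "k = length xs")
    case True then show ?thesis using H by (auto simp: nth_append)
  next
    case False then show ?thesis using H unfolding contains_021_def
      by (intro disjI1 exI[of _ i] exI[of _ j] exI[of _ k]) (auto simp: nth_append)
  qed
next
  assume "contains_021 xs \<or> (\<exists>i j. i < j \<and> j < length xs \<and> xs!i < v \<and> v < xs!j)"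
  then show "contains_021 (xs @ [v])"
  proof
    assume "contains_021 xs" then show ?thesis by (simp add: contains_021_iff_132 contains_132_append_left)
  next
    assume "\<exists>i j. i < j \<and> j < length xs \<and> xs!i < v \<and> v < xs!j"
    then obtain i j where "i < j" "j < length xs" "xs!i < v" "v < xs!j" by blast
    then show ?thesis unfolding contains_021_def
      by (intro exI[of _ i] exI[of _ j] exI[of _ "length xs"]) (auto simp: nth_append)
  qed
qed

lemma asc_seq_021_Nil: "asc_seq_021 []" by (simp add: asc_seq_021_def is_ascent_seq_def contains_021_def)

lemma asc_seq_021_hd: "asc_seq_021 xs \<Longrightarrow> xs \<noteq> [] \<Longrightarrow> xs ! 0 = 0"
  by (simp add: asc_seq_021_def is_ascent_seq_def)

lemma asc_seq_021_snoc: "asc_seq_021 (xs @ [v]) \<longleftrightarrow> (xs = [] \<and> v = 0) \<or>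
   (xs \<noteq> [] \<and> asc_seq_021 xs \<and> v \<le> asc xs + 1 \<and> (0 < v \<longrightarrow> (\<forall>u\<in>set xs. u \<le> v)))"
proof (cases "xs = []")
  case True then show ?thesis
    by (auto simp: asc_seq_021_def is_ascent_seq_snoc contains_021_snoc is_ascent_seq_def contains_021_def)
next
  case nonempty: False
  show ?thesis
  proof (cases "asc_seq_021 xs")
    case False
    then show ?thesis using nonempty by (auto simp: asc_seq_021_def is_ascent_seq_snoc contains_021_snoc)
  next
    case True
    have x0: "xs ! 0 = 0" using asc_seq_021_hd[OF True nonempty] .
    have "(\<exists>i j. i < j \<and> j < length xs \<and> xs!i < v \<and> v < xs!j) \<longleftrightarrow> (0 < v \<and> (\<exists>u\<in>set xs. v < u))"
    proof
      assume "\<exists>i j. i < j \<and> j < length xs \<and> xs!i < v \<and> v < xs!j"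
      then obtain i j where "i < j" "j < length xs" "xs!i < v" "v < xs!j" by blast
      then show "0 < v \<and> (\<exists>u\<in>set xs. v < u)" by (auto intro: nth_mem)
    next
      assume "0 < v \<and> (\<exists>u\<in>set xs. v < u)"
      then obtain j where j: "0 < v" "j < length xs" "v < xs!j" by (auto simp: in_set_conv_nth)
      have "j \<noteq> 0"
      proof
        assume "j = 0" then show False using j x0 by simp
      qed
      then show "\<exists>i j. i < j \<and> j < length xs \<and> xs!i < v \<and> v < xs!j"
        using j x0 by (intro exI[of _ 0] exI[of _ j]) auto
    qed
    then show ?thesis using True nonempty by (auto simp: asc_seq_021_def is_ascent_seq_snoc contains_021_snoc not_less)
  qed
qed

lemma asc_seq_021_append_zeros: "asc_seq_021 y \<Longrightarrow> y \<noteq> [] \<Longrightarrow> asc_seq_021 (y @ replicate t 0)"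
proof (induction t)
  case 0 then show ?case by simp
next
  case (Suc t)
  have "y @ replicate (Suc t) 0 = (y @ replicate t 0) @ [0]" by (simp add: replicate_append_same[symmetric])
  then show ?case using Suc asc_seq_021_snoc[of "y @ replicate t 0" 0] by simp
qed

lemma asc_seq_021_append_replicate:
  "asc_seq_021 y \<Longrightarrow> y \<noteq> [] \<Longrightarrow> last y = v \<Longrightarrow> (\<forall>u\<in>set y. u \<le> v) \<Longrightarrow> v \<le> asc y + 1
   \<Longrightarrow> asc_seq_021 (y @ replicate s v)"
proof (induction s)
  case 0 then show ?case by simp
next
  case (Suc s)
  have e: "y @ replicate (Suc s) v = (y @ replicate s v) @ [v]" by (simp add: replicate_append_same[symmetric])
  have "asc (y @ replicate s v) = asc y" using Suc.prems asc_append_replicate_last by simp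
  then show ?case unfolding e using Suc asc_seq_021_snoc[of "y @ replicate s v" v] by auto
qed

section \<open>Segment lists\<close>

text \<open>
  A segment (v, s, t) stands for the word v^(s+1) 0^t. In segs_ok a pv pz, a counts the segments
  so far (each one after the first starts with an ascent), pv is the value of the previous segment
  and pz tells whether it ended with zeros. Values are bounded by a + 1 and weakly increase,
  strictly between segments without zeros in between, so that the segments are maximal runs.
\<close>

type_synonym seg = "nat \<times> nat \<times> nat"

fun segs_ok :: "nat \<Rightarrow> nat \<Rightarrow> bool \<Rightarrow> seg list \<Rightarrow> bool" where
  "segs_ok a pv pz [] = True"
| "segs_ok a pv pz ((v,s,t)#r) = (0 < v \<and> v \<le> Suc a \<and> (if pz then pv \<le> v else pv < v) \<and> segs_ok (Suc a) v (0 < t) r)"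

fun valid_segs :: "seg list \<Rightarrow> bool" where
  "valid_segs [] = False"
| "valid_segs ((v,s,t)#r) = (v = 0 \<and> s = 0 \<and> segs_ok 0 0 (0 < t) r)"

fun seg_word :: "seg \<Rightarrow> nat list" where
  "seg_word (v,s,t) = replicate (Suc s) v @ replicate t 0"

definition decode :: "seg list \<Rightarrow> nat list" where
  "decode L = concat (map seg_word L)"

fun has_zeros :: "seg \<Rightarrow> bool" where
  "has_zeros (v,s,t) = (v = 0 \<or> 0 < t)"

definition segs_asc :: "seg list \<Rightarrow> nat" where "segs_asc L = length L - 1"

text \<open>Only the last entry and the last entries of the trailing zero-free segments are right-to-left minima.\<close>

definition segs_rlm :: "seg list \<Rightarrow> nat" where
  "segs_rlm L = Suc (length (takeWhile (\<lambda>x. \<not> has_zeros x) (rev L)))"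

lemma segs_ok_append: "segs_ok a pv pz (A @ B) \<longleftrightarrow> segs_ok a pv pz A \<and>
   segs_ok (a + length A) (if A = [] then pv else fst (last A)) (if A = [] then pz else 0 < snd (snd (last A))) B"
  by (induction a pv pz A rule: segs_ok.induct) auto

lemma decode_append[simp]: "decode (A @ B) = decode A @ decode B" by (simp add: decode_def)
lemma decode_Cons[simp]: "decode (x # B) = seg_word x @ decode B" by (simp add: decode_def)
lemma decode_Nil[simp]: "decode [] = []" by (simp add: decode_def)

definition last_value :: "seg list \<Rightarrow> nat" where "last_value L = fst (last L)"
definition last_entry :: "seg list \<Rightarrow> nat" where "last_entry L = (if has_zeros (last L) then 0 else fst (last L))"

lemma has_zeros_iff: "has_zeros x \<longleftrightarrow> fst x = 0 \<or> 0 < snd (snd x)" by (cases x) auto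

lemma asc_seq_021_append_seg:
  assumes "asc_seq_021 y" "y \<noteq> []" "\<forall>u\<in>set y. u \<le> v" "last y < v" "v \<le> asc y + 1"
  shows "asc_seq_021 (y @ seg_word (v,s,t)) \<and> asc (y @ seg_word (v,s,t)) = asc y + 1"
proof -
  have "asc_seq_021 (y @ [v])" using assms asc_seq_021_snoc[of y v] by auto
  then have "asc_seq_021 ((y @ [v]) @ replicate s v)"
    by (rule asc_seq_021_append_replicate) (use assms in \<open>auto simp: asc_append\<close>)
  then have "asc_seq_021 (((y @ [v]) @ replicate s v) @ replicate t 0)"
    by (rule asc_seq_021_append_zeros) simp
  moreover have "asc (replicate (Suc s) v @ replicate t 0) = 0"
    using asc_append[of "replicate (Suc s) v" "replicate t (0::nat)"] by (cases t) (simp_all del: replicate_Suc)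
  then have "asc (y @ seg_word (v,s,t)) = asc y + 1"
    using assms by (simp add: asc_append[of y] del: replicate_Suc)
  ultimately show ?thesis by simp
qed

lemma rlm_append_seg:
  assumes "y \<noteq> []" "last y < v"
  shows "rlm (y @ seg_word (v,s,t)) = (if t = 0 then rlm y + 1 else 1)"
proof (cases t)
  case 0
  have "rlm (y @ replicate (Suc s) v) = rlm y + rlm (replicate (Suc s) v)"
    by (rule rlm_append_last) (use assms in auto)
  then show ?thesis using 0 by simp
next
  case (Suc t')
  then have "y @ seg_word (v,s,t) = (y @ replicate (Suc s) v @ replicate t' 0) @ [0]"
    by (simp add: replicate_append_same[symmetric])
  then have "rlm (y @ seg_word (v,s,t)) = 1" by (simp only: rlm_snoc_0)
  then show ?thesis using Suc by simp
qed

lemma decode_props: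
  assumes "segs_ok 0 0 (0 < t0) S"
  shows "asc_seq_021 (decode ((0,0,t0) # S)) \<and> asc (decode ((0,0,t0) # S)) = length S \<and>
    (\<forall>u\<in>set (decode ((0,0,t0) # S)). u \<le> last_value ((0,0,t0) # S)) \<and>
    decode ((0,0,t0) # S) \<noteq> [] \<and>
    last (decode ((0,0,t0) # S)) = last_entry ((0,0,t0) # S) \<and>
    rlm (decode ((0,0,t0) # S)) = segs_rlm ((0,0,t0) # S)"
  using assms
proof (induction S rule: rev_induct)
  case Nil
  have "asc_seq_021 ([0] @ replicate t0 0)"
    by (rule asc_seq_021_append_zeros) (use asc_seq_021_snoc[of "[]" 0] asc_seq_021_Nil in auto)
  moreover have "rlm (replicate (Suc t0) 0) = 1" by simp
  ultimately show ?case by (simp add: last_value_def last_entry_def segs_rlm_def)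
next
  case (snoc x S)
  obtain v s t where x: "x = (v,s,t)" by (cases x) auto
  define L where "L = (0,0,t0) # S"
  define y where "y = decode L"
  have ok: "segs_ok 0 0 (0 < t0) S" and v: "0 < v" "v \<le> Suc (length S)"
    and ch: "if has_zeros (last L) then last_value L \<le> v else last_value L < v"
    using snoc.prems unfolding x L_def
    by (auto simp: segs_ok_append last_value_def split: if_splits) (cases "last S"; auto split: if_splits)+
  have IH: "asc_seq_021 y" "asc y = length S" "\<forall>u\<in>set y. u \<le> last_value L" "y \<noteq> []"
      "last y = last_entry L" "rlm y = segs_rlm L"
    using snoc.IH[OF ok] unfolding y_def L_def by auto
  have "last_value L \<le> v" using ch by (auto split: if_splits)
  then have bound: "\<forall>u\<in>set y. u \<le> v" using IH(3) by auto
  have "last y < v" using ch v IH(5) by (auto simp: last_entry_def last_value_def split: if_splits)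
  then have "asc_seq_021 (y @ seg_word (v,s,t))" "asc (y @ seg_word (v,s,t)) = length S + 1"
    "rlm (y @ seg_word (v,s,t)) = (if t = 0 then segs_rlm L + 1 else 1)"
    using asc_seq_021_append_seg[of y v s t] rlm_append_seg[of y v s t] IH bound v by auto
  moreover have "decode ((0,0,t0) # S @ [x]) = y @ seg_word (v,s,t)"
    unfolding x y_def L_def by simp
  moreover have "last_value ((0,0,t0) # S @ [x]) = v"
    "last_entry ((0,0,t0) # S @ [x]) = (if t = 0 then v else 0)"
    "segs_rlm ((0,0,t0) # S @ [x]) = (if t = 0 then segs_rlm L + 1 else 1)"
    using v by (simp_all add: x last_value_def last_entry_def segs_rlm_def L_def)
  moreover have "\<forall>u\<in>set (seg_word (v,s,t)). u \<le> v" "last (y @ seg_word (v,s,t)) = (if t = 0 then v else 0)"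
    by auto
  ultimately show ?case using bound by (simp only: length_append_singleton) auto
qed

fun add_zero :: "seg \<Rightarrow> seg" where "add_zero (v,s,t) = (v,s,Suc t)"
fun add_repeat :: "seg \<Rightarrow> seg" where "add_repeat (v,s,t) = (v,Suc s,t)"

definition encode_step :: "seg list \<Rightarrow> nat \<Rightarrow> seg list" where
  "encode_step L w = (if w = 0 then butlast L @ [add_zero (last L)]
     else if snd (snd (last L)) = 0 \<and> fst (last L) = w then butlast L @ [add_repeat (last L)]
     else L @ [(w,0,0)])"

text \<open>The first entry of an ascent sequence is 0, so encode ignores it.\<close>

fun encode :: "nat list \<Rightarrow> seg list" where
  "encode [] = [(0,0,0)]"
| "encode (a # xs) = foldl encode_step [(0,0,0)] xs"

lemma encode_step_zero: "encode_step L 0 = butlast L @ [add_zero (last L)]" by (simp add: encode_step_def)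
lemma encode_step_repeat:
  "0 < w \<Longrightarrow> snd (snd (last L)) = 0 \<Longrightarrow> fst (last L) = w \<Longrightarrow> encode_step L w = butlast L @ [add_repeat (last L)]"
  by (simp add: encode_step_def)
lemma encode_step_new:
  "0 < w \<Longrightarrow> \<not> (snd (snd (last L)) = 0 \<and> fst (last L) = w) \<Longrightarrow> encode_step L w = L @ [(w,0,0)]"
  unfolding encode_step_def by (intro trans[OF if_not_P] if_not_P) auto

lemma foldl_encode_step_zeros: "foldl encode_step (A @ [(v,s,k)]) (replicate j 0) = A @ [(v,s,k+j)]"
  by (induction j arbitrary: k) (auto simp: encode_step_def)

lemma foldl_encode_step_repeats: "0 < v \<Longrightarrow> foldl encode_step (A @ [(v,k,0)]) (replicate j v) = A @ [(v,k+j,0)]"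
  by (induction j arbitrary: k) (auto simp: encode_step_def)

lemma segs_ok_last_cong: "segs_ok a pv pz (S @ [(v,s,t)]) = segs_ok a pv pz (S @ [(v,s',t')])"
  by (simp add: segs_ok_append)

lemma segs_ok_snoc_iff:
  "segs_ok a pv pz (S @ [(v,s,t)]) \<longleftrightarrow> segs_ok a pv pz S \<and> 0 < v \<and> v \<le> Suc (a + length S) \<and>
   (if (if S = [] then pz else 0 < snd (snd (last S))) then (if S = [] then pv else fst (last S)) \<le> v
    else (if S = [] then pv else fst (last S)) < v)"
  by (simp add: segs_ok_append)

lemma encode_decode_aux:
  assumes "segs_ok 0 0 (0 < t0) S"
  shows "foldl encode_step [(0,0,0)] (replicate t0 0 @ decode S) = (0,0,t0) # S"
  using assms
proof (induction S rule: rev_induct)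
  case Nil
  show ?case using foldl_encode_step_zeros[of "[]" 0 0 0 t0] by simp
next
  case (snoc x S)
  obtain v s t where x: "x = (v,s,t)" by (cases x) auto
  have ok: "segs_ok 0 0 (0 < t0) S" using snoc.prems x by (simp add: segs_ok_append)
  have IH: "foldl encode_step [(0,0,0)] (replicate t0 0 @ decode S) = (0,0,t0) # S" using snoc.IH[OF ok] .
  have c: "0 < v" "\<not> (snd (snd (last ((0,0,t0) # S))) = 0 \<and> fst (last ((0,0,t0) # S)) = v)"
    using snoc.prems x by (auto simp: segs_ok_snoc_iff split: if_splits)
  have st: "encode_step ((0,0,t0) # S) v = ((0,0,t0) # S) @ [(v,0,0)]"
    by (rule encode_step_new[OF c])
  have "foldl encode_step [(0,0,0)] (replicate t0 0 @ decode (S @ [x]))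
      = foldl encode_step (encode_step ((0,0,t0) # S) v) (replicate s v @ replicate t 0)"
    using IH x by simp
  also have "\<dots> = foldl encode_step (((0,0,t0) # S) @ [(v,s,0)]) (replicate t 0)"
    using st foldl_encode_step_repeats[OF c(1), of "(0,0,t0) # S" 0 s] by simp
  also have "\<dots> = ((0,0,t0) # S) @ [(v,s,t)]" using foldl_encode_step_zeros[of "(0,0,t0) # S" v s 0 t] by simp
  finally show ?case using x by simp
qed

lemma valid_segsE:
  assumes "valid_segs L"
  obtains t0 S where "L = (0,0,t0) # S" "segs_ok 0 0 (0 < t0) S"
  using assms by (cases L rule: valid_segs.cases) auto

lemma encode_decode: "valid_segs L \<Longrightarrow> encode (decode L) = L"
proof -
  assume "valid_segs L"
  then obtain t0 S where L: "L = (0,0,t0) # S" "segs_ok 0 0 (0 < t0) S" using valid_segsE by blast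
  have "decode L = 0 # (replicate t0 0 @ decode S)" using L by simp
  then show ?thesis using encode_decode_aux[OF L(2)] L by simp
qed

lemma seg_word_add_zero: "seg_word (add_zero x) = seg_word x @ [0]"
  by (cases x) (simp add: replicate_append_same[symmetric])

lemma seg_word_add_repeat: "snd (snd x) = 0 \<Longrightarrow> seg_word (add_repeat x) = seg_word x @ [fst x]"
  by (cases x) (simp add: replicate_append_same[symmetric])

lemma last_value_mem: "S \<noteq> [] \<Longrightarrow> fst (last S) \<in> set (decode S)"
proof -
  assume "S \<noteq> []"
  then have "S = butlast S @ [last S]" by simp
  moreover have "fst (last S) \<in> set (seg_word (last S))" by (cases "last S") auto
  ultimately show ?thesis by (metis decode_append decode_Cons decode_Nil append_Nil2 in_set_conv_decomp set_append Un_iff)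
qed

lemma encode_snoc: "xs \<noteq> [] \<Longrightarrow> encode (xs @ [w]) = encode_step (encode xs) w"
  by (cases xs) auto

lemma encode_step_zero_correct:
  assumes "valid_segs L"
  shows "valid_segs (encode_step L 0) \<and> decode (encode_step L 0) = decode L @ [0]"
proof -
  obtain t0 S where L: "L = (0,0,t0) # S" "segs_ok 0 0 (0 < t0) S" using valid_segsE[OF assms] by blast
  show ?thesis
  proof (cases "S = []")
    case True
    then show ?thesis using L by (simp add: encode_step_zero replicate_append_same[symmetric])
  next
    case False
    obtain v s t where ls: "last S = (v,s,t)" by (cases "last S") auto
    then have "segs_ok 0 0 (0 < t0) (butlast S @ [add_zero (last S)])"
      using L(2) False segs_ok_last_cong[of 0 0 "0<t0" "butlast S" v s t s "Suc t"]
      by (metis add_zero.simps append_butlast_last_id)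
    moreover have "decode (butlast S @ [add_zero (last S)]) = decode S @ [0]"
      using False seg_word_add_zero by (metis append.assoc decode_append decode_Cons decode_Nil append_Nil2 append_butlast_last_id)
    ultimately show ?thesis using L False by (simp add: encode_step_zero)
  qed
qed

lemma encode_step_repeat_correct:
  assumes "valid_segs L" "0 < w" "snd (snd (last L)) = 0" "fst (last L) = w"
  shows "valid_segs (encode_step L w) \<and> decode (encode_step L w) = decode L @ [w]"
proof -
  obtain t0 S where L: "L = (0,0,t0) # S" "segs_ok 0 0 (0 < t0) S" using valid_segsE[OF assms(1)] by blast
  have "S \<noteq> []" using L assms by auto
  obtain v s t where ls: "last S = (v,s,t)" by (cases "last S") auto
  then have "segs_ok 0 0 (0 < t0) (butlast S @ [add_repeat (last S)])"
    using L(2) \<open>S \<noteq> []\<close> segs_ok_last_cong[of 0 0 "0<t0" "butlast S" v s t "Suc s" t]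
    by (metis add_repeat.simps append_butlast_last_id)
  moreover have "decode (butlast S @ [add_repeat (last S)]) = decode S @ [w]"
    using \<open>S \<noteq> []\<close> seg_word_add_repeat[of "last S"] assms L
    by (metis append.assoc decode_append decode_Cons decode_Nil append_Nil2 append_butlast_last_id last_ConsR)
  ultimately show ?thesis using L assms \<open>S \<noteq> []\<close> by (simp add: encode_step_repeat)
qed

lemma encode_step_new_correct:
  assumes "valid_segs L" "asc_seq_021 (decode L @ [w])" "0 < w"
    and "\<not> (snd (snd (last L)) = 0 \<and> fst (last L) = w)"
  shows "valid_segs (encode_step L w) \<and> decode (encode_step L w) = decode L @ [w]"
proof -
  obtain t0 S where L: "L = (0,0,t0) # S" "segs_ok 0 0 (0 < t0) S" using valid_segsE[OF assms(1)] by blast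
  have "w \<le> length S + 1" "\<forall>u\<in>set (decode L). u \<le> w"
    using assms(2,3) asc_seq_021_snoc[of "decode L" w] decode_props[OF L(2)] L(1) by auto
  moreover have "S \<noteq> [] \<Longrightarrow> fst (last S) \<in> set (decode L)"
    using last_value_mem L(1) by auto
  ultimately have "S \<noteq> [] \<Longrightarrow> fst (last S) \<le> w" by blast
  with \<open>w \<le> length S + 1\<close> have "segs_ok 0 0 (0 < t0) (S @ [(w,0,0)])"
    using L assms(3,4) by (cases "S = []") (auto simp: segs_ok_snoc_iff)
  then show ?thesis using L assms(3,4) by (simp add: encode_step_new)
qed

lemma decode_encode:
  "asc_seq_021 x \<Longrightarrow> x \<noteq> [] \<Longrightarrow> valid_segs (encode x) \<and> decode (encode x) = x"
proof (induction x rule: rev_induct)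
  case (snoc w x)
  show ?case
  proof (cases "x = []")
    case True
    then show ?thesis using snoc.prems asc_seq_021_snoc[of "[]" w] by simp
  next
    case False
    then have IH: "valid_segs (encode x)" "decode (encode x) = x"
      using snoc asc_seq_021_snoc by auto
    consider "w = 0" | "0 < w" "snd (snd (last (encode x))) = 0" "fst (last (encode x)) = w"
      | "0 < w" "\<not> (snd (snd (last (encode x))) = 0 \<and> fst (last (encode x)) = w)"
      by fastforce
    then have "valid_segs (encode_step (encode x) w) \<and> decode (encode_step (encode x) w) = x @ [w]"
    proof cases
      case 1
      then show ?thesis using encode_step_zero_correct[OF IH(1)] IH(2) by simp
    next
      case 2
      then show ?thesis using encode_step_repeat_correct[OF IH(1)] IH(2) by simp
    next
      case 3
      then show ?thesis using encode_step_new_correct[OF IH(1)] IH(2) snoc.prems by simp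
    qed
    then show ?thesis using encode_snoc[OF False] by simp
  qed
qed simp

lemma valid_segs_decode:
  "valid_segs L \<Longrightarrow> asc_seq_021 (decode L) \<and> asc (decode L) = segs_asc L \<and> rlm (decode L) = segs_rlm L \<and> decode L \<noteq> []"
proof -
  assume "valid_segs L"
  then obtain t0 S where L: "L = (0,0,t0) # S" "segs_ok 0 0 (0 < t0) S" using valid_segsE by blast
  show ?thesis using decode_props[OF L(2)] L(1) by (simp add: segs_asc_def)
qed

section \<open>Decomposing segment lists\<close>

fun raise :: "nat \<Rightarrow> seg \<Rightarrow> seg" where "raise c (v,s,t) = (v + c, s, t)"
fun lower :: "nat \<Rightarrow> seg \<Rightarrow> seg" where "lower c (v,s,t) = (v - c, s, t)"
fun remove_zero :: "seg \<Rightarrow> seg" where "remove_zero (v,s,t) = (v,s,t - 1)"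

lemma fst_raise[simp]: "fst (raise m x) = fst x + m" by (cases x) simp
lemma snd_raise[simp]: "snd (raise m x) = snd x" by (cases x) simp
lemma remove_zero_raise: "remove_zero (raise m x) = raise m (remove_zero x)" by (cases x) simp
lemma raise_0[simp]: "raise 0 x = x" by (cases x) simp
lemma map_raise_0[simp]: "map (raise 0) S = S" by (induction S) auto
lemma add_zero_remove_zero: "0 < snd (snd x) \<Longrightarrow> add_zero (remove_zero x) = x" by (cases x) simp
lemma remove_zero_add_zero[simp]: "remove_zero (add_zero x) = x" by (cases x) simp
lemma zeros_add_zero[simp]: "snd (snd (add_zero x)) = Suc (snd (snd x))" by (cases x) simp
lemma fst_add_zero[simp]: "fst (add_zero x) = fst x" by (cases x) simp
lemma has_zeros_add_zero[simp]: "has_zeros (add_zero x)" by (cases x) simp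
lemma raise_lower: "m \<le> fst x \<Longrightarrow> raise m (lower m x) = x" by (cases x) simp
lemma lower_raise[simp]: "lower m (raise m x) = x" by (cases x) simp
lemma length_decode_raise[simp]: "length (decode (map (raise m) S)) = length (decode S)"
  by (induction S) auto

lemma segs_ok_change_prev:
  "segs_ok a pv pz S \<Longrightarrow> (S \<noteq> [] \<Longrightarrow> (if pz' then pv' \<le> fst (hd S) else pv' < fst (hd S))) \<Longrightarrow> segs_ok a pv' pz' S"
  by (cases S) auto

lemma segs_ok_raise: "segs_ok a pv pz S \<Longrightarrow> segs_ok (a + m) (pv + m) pz (map (raise m) S)"
proof (induction S arbitrary: a pv pz)
  case Nil then show ?case by simp
next
  case (Cons x S)
  obtain v s t where x: "x = (v,s,t)" by (cases x) auto
  show ?case using Cons.IH[of "Suc a" v "0 < t"] Cons.prems x by auto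
qed

lemma segs_ok_lower:
  "segs_ok (a + m) (pv + m) pz (map (raise m) S) \<Longrightarrow> (\<forall>x\<in>set S. 0 < fst x) \<Longrightarrow> segs_ok a pv pz S"
proof (induction S arbitrary: a pv pz)
  case Nil then show ?case by simp
next
  case (Cons x S)
  obtain v s t where x: "x = (v,s,t)" by (cases x) auto
  show ?case using Cons.IH[of "Suc a" v "0 < t"] Cons.prems x by (auto split: if_splits)
qed

lemma segs_ok_pos: "segs_ok a pv pz S \<Longrightarrow> x \<in> set S \<Longrightarrow> 0 < fst x"
  by (induction a pv pz S rule: segs_ok.induct) auto

lemma segs_ok_hd_le: "segs_ok a pv pz S \<Longrightarrow> x \<in> set S \<Longrightarrow> fst (hd S) \<le> fst x"
proof (induction a pv pz S arbitrary: x rule: segs_ok.induct)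
  case (1 a pv pz) then show ?case by simp
next
  case (2 a pv pz v s t r)
  show ?case
  proof (cases "x = (v,s,t)")
    case False
    then have xr: "x \<in> set r" using 2 by simp
    then have rne: "r \<noteq> []" by auto
    have "fst (hd r) \<le> fst x" using 2 xr by simp
    moreover have "v \<le> fst (hd r)" using 2(2) rne by (cases r) (auto split: if_splits)
    ultimately show ?thesis by simp
  qed simp
qed

lemma segs_ok_last_le: "segs_ok a pv pz S \<Longrightarrow> S \<noteq> [] \<Longrightarrow> fst (last S) \<le> a + length S"
proof (induction a pv pz S rule: segs_ok.induct)
  case (1 a pv pz) then show ?case by simp
next
  case (2 a pv pz v s t r)
  show ?case
  proof (cases "r = []")
    case True then show ?thesis using "2.prems" by simp
  next
    case False then show ?thesis using 2 by simp
  qed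
qed

text \<open>
  Values are passed on one segment to the right, raised by one across a segment without zeros,
  and repetition counts move one segment to the right. Hence a segment ending with zeros is never
  followed by a value of maximal size.
\<close>

fun shift_repeats :: "nat \<Rightarrow> nat \<Rightarrow> seg list \<Rightarrow> seg list" where
  "shift_repeats v s [] = [(v,s,0)]"
| "shift_repeats v s ((v',s',t')#r) = (v,s,t') # shift_repeats (if t' = 0 then Suc v' else v') s' r"

fun unshift_repeats :: "seg list \<Rightarrow> nat \<times> seg list" where
  "unshift_repeats [] = (0, [])"
| "unshift_repeats [(v,s,t)] = (s, [])"
| "unshift_repeats ((v,s,t) # y # r) = (s, (fst y - (if t = 0 then 1 else 0), fst (unshift_repeats (y # r)), t) # snd (unshift_repeats (y # r)))"

lemma Nil_not_shift_repeats[simp]: "[] \<noteq> shift_repeats v s S" by (cases S) auto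
lemma shift_repeats_not_Nil[simp]: "shift_repeats v s S \<noteq> []" by (cases S) auto
lemma hd_shift_repeats[simp]: "hd (shift_repeats v s S) = (v, s, (if S = [] then 0 else snd (snd (hd S))))"
  by (cases S) auto

lemma unshift_shift_repeats: "unshift_repeats (shift_repeats v s S) = (s, S)"
proof (induction v s S rule: shift_repeats.induct)
  case (1 v s) then show ?case by simp
next
  case (2 v s v' s' t' r)
  obtain y q where e: "shift_repeats (if t' = 0 then Suc v' else v') s' r = y # q" by (cases "shift_repeats (if t' = 0 then Suc v' else v') s' r") auto
  have "fst y = (if t' = 0 then Suc v' else v')" using hd_shift_repeats[of "(if t' = 0 then Suc v' else v')" s' r] e by simp
  then show ?case using 2 e by simp
qed

lemma segs_ok_shift_repeats:
  "segs_ok a pv pz S \<Longrightarrow> 0 < v \<Longrightarrow> v \<le> Suc a \<Longrightarrow> (S \<noteq> [] \<Longrightarrow> v \<le> fst (hd S)) \<Longrightarrow>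
   (if qz then qv \<le> v else qv < v) \<Longrightarrow> segs_ok a qv qz (shift_repeats v s S)"
proof (induction S arbitrary: a pv pz v s qv qz)
  case Nil then show ?case by simp
next
  case (Cons x r)
  obtain v' s' t' where x: "x = (v',s',t')" by (cases x) auto
  have o: "0 < v'" "v' \<le> Suc a" "segs_ok (Suc a) v' (0 < t') r" "if pz then pv \<le> v' else pv < v'"
    using Cons.prems(1) x by auto
  have vv: "v \<le> v'" using Cons.prems(4) x by simp
  have "segs_ok (Suc a) v (0 < t') (shift_repeats (if t' = 0 then Suc v' else v') s' r)"
  proof (rule Cons.IH[OF o(3)])
    show "0 < (if t' = 0 then Suc v' else v')" using o by simp
    show "(if t' = 0 then Suc v' else v') \<le> Suc (Suc a)" using o by simp
    show "r \<noteq> [] \<Longrightarrow> (if t' = 0 then Suc v' else v') \<le> fst (hd r)"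
      using o(3) by (cases r) (auto split: if_splits)
    show "if 0 < t' then v \<le> (if t' = 0 then Suc v' else v') else v < (if t' = 0 then Suc v' else v')"
      using vv by simp
  qed
  then show ?case using Cons.prems x by simp
qed

lemma zeros_shift_repeats: "map (\<lambda>x. snd (snd x)) (shift_repeats v s S) = map (\<lambda>x. snd (snd x)) S @ [0]"
  by (induction v s S rule: shift_repeats.induct) auto

lemma shift_repeats_pos:
  "segs_ok a pv pz S \<Longrightarrow> 0 < v \<Longrightarrow> x \<in> set (shift_repeats v s S) \<Longrightarrow> 0 < fst x"
proof (induction v s S arbitrary: a pv pz rule: shift_repeats.induct)
  case (1 v s) then show ?case by simp
next
  case (2 v s v' s' t' r)
  show ?case using 2 by (auto split: if_splits)
qed

lemma length_decode_shift_repeats: "length (decode (shift_repeats v s S)) = Suc s + length (decode S)"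
  by (induction v s S rule: shift_repeats.induct) auto

lemma shift_unshift_repeats:
  "segs_ok a qv qz q \<Longrightarrow> q \<noteq> [] \<Longrightarrow> snd (snd (last q)) = 0 \<Longrightarrow>
   shift_repeats (fst (hd q)) (fst (unshift_repeats q)) (snd (unshift_repeats q)) = q"
proof (induction q arbitrary: a qv qz rule: unshift_repeats.induct)
  case 1 then show ?case by simp
next
  case (2 v s t) then show ?case by simp
next
  case (3 v s t y r)
  obtain v' s' t' where y: "y = (v',s',t')" by (cases y) auto
  have ok: "segs_ok (Suc a) v (0 < t) (y # r)" using "3.prems"(1) y by simp
  have v'pos: "0 < v'" using ok y by simp
  have IH: "shift_repeats v' (fst (unshift_repeats (y # r))) (snd (unshift_repeats (y # r))) = y # r"
    using "3.IH"[OF ok] "3.prems"(3) y by simp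
  have "fst (unshift_repeats (y # r)) = s'" using y by (cases r) auto
  then show ?case using IH y v'pos by (cases t) auto
qed

text \<open>
  In split_segs a L, a is the index of the first segment of L. The list is cut after the last
  segment that ends with zeros and is followed either by nothing or by a segment whose value is
  its index, the largest value allowed there; one zero is removed from that segment.
\<close>

fun split_segs :: "nat \<Rightarrow> seg list \<Rightarrow> (seg list \<times> seg list) option" where
  "split_segs a [] = None"
| "split_segs a (x # r) = (case split_segs (Suc a) r of Some (A, B) \<Rightarrow> Some (x # A, B)
     | None \<Rightarrow> (if 0 < snd (snd x) \<and> (r = [] \<or> fst (hd r) = Suc a) then Some ([remove_zero x], r) else None))"

lemma split_segs_shift_repeats: "segs_ok a pv pz S \<Longrightarrow> split_segs (Suc a) (shift_repeats v s S) = None"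
proof (induction S arbitrary: a pv pz v s)
  case Nil then show ?case by simp
next
  case (Cons x r)
  obtain v' s' t' where x: "x = (v',s',t')" by (cases x) auto
  have o: "v' \<le> Suc a" "segs_ok (Suc a) v' (0 < t') r" using Cons.prems x by auto
  have "split_segs (Suc (Suc a)) (shift_repeats (if t' = 0 then Suc v' else v') s' r) = None" using Cons.IH[OF o(2)] .
  then show ?case using x o by auto
qed

lemma segs_ok_unshift_repeats:
  "segs_ok a qv qz q \<Longrightarrow> split_segs (Suc a) q = None \<Longrightarrow> q \<noteq> [] \<Longrightarrow>
  (if pz then pv \<le> fst (hd q) else pv < fst (hd q)) \<Longrightarrow> segs_ok a pv pz (snd (unshift_repeats q))"
proof (induction q arbitrary: a qv qz pv pz rule: unshift_repeats.induct)
  case 1 then show ?case by simp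
next
  case (2 v s t) then show ?case by simp
next
  case (3 v s t y r)
  obtain v' s' t' where y: "y = (v',s',t')" by (cases y) auto
  have o: "0 < v" "v \<le> Suc a" "segs_ok (Suc a) v (0 < t) (y # r)" using "3.prems"(1) by auto
  have o2: "0 < v'" "v' \<le> Suc (Suc a)" "if 0 < t then v \<le> v' else v < v'" using o(3) y by auto
  have sp: "split_segs (Suc (Suc a)) (y # r) = None" "\<not> (0 < t \<and> v' = Suc (Suc a))"
    using "3.prems"(2) y by (auto split: option.splits if_splits)
  define w where "w = v' - (if t = 0 then 1 else 0)"
  have w: "0 < w" "w \<le> Suc a" "v \<le> w" using o o2 sp unfolding w_def by (auto split: if_splits)
  have IH: "segs_ok (Suc a) w (0 < t) (snd (unshift_repeats (y # r)))"
    by (rule "3.IH"[OF o(3) sp(1)]) (use o2 y w_def in auto)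
  have ch: "if pz then pv \<le> w else pv < w" using "3.prems"(4) w by (auto split: if_splits)
  show ?case using IH w ch y unfolding w_def by simp
qed

lemma split_segs_raise:
  "split_segs (a + m) (map (raise m) S) = map_option (\<lambda>(C,D). (map (raise m) C, map (raise m) D)) (split_segs a S)"
proof (induction S arbitrary: a)
  case Nil then show ?case by simp
next
  case (Cons x r)
  have IH: "split_segs (Suc a + m) (map (raise m) r) = map_option (\<lambda>(C,D). (map (raise m) C, map (raise m) D)) (split_segs (Suc a) r)"
    using Cons.IH by blast
  show ?case
  proof (cases "split_segs (Suc a) r")
    case None
    then have "split_segs (Suc (a + m)) (map (raise m) r) = None" using IH by simp
    moreover have "(map (raise m) r = [] \<or> fst (hd (map (raise m) r)) = Suc (a + m)) \<longleftrightarrow> (r = [] \<or> fst (hd r) = Suc a)"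
      by (cases r) auto
    ultimately show ?thesis using None by (simp add: remove_zero_raise)
  next
    case (Some CD)
    then obtain C D where "split_segs (Suc a) r = Some (C, D)" by (cases CD) auto
    then show ?thesis using IH by simp
  qed
qed

lemma split_segs_Some:
  "split_segs a L = Some (A, B) \<Longrightarrow> A \<noteq> [] \<and> L = butlast A @ [add_zero (last A)] @ B \<and>
   (B = [] \<or> fst (hd B) = a + length A) \<and> split_segs (a + length A) B = None"
proof (induction L arbitrary: a A B)
  case Nil then show ?case by simp
next
  case (Cons x r)
  show ?case
  proof (cases "split_segs (Suc a) r")
    case None
    then have c: "0 < snd (snd x) \<and> (r = [] \<or> fst (hd r) = Suc a)" "A = [remove_zero x]" "B = r"
      using Cons.prems by (auto split: if_splits)
    then show ?thesis using None add_zero_remove_zero[of x] by auto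
  next
    case (Some CD)
    then obtain C D where s: "split_segs (Suc a) r = Some (C, D)" by (cases CD) auto
    then have e: "A = x # C" "B = D" using Cons.prems by auto
    have IH: "C \<noteq> [] \<and> r = butlast C @ [add_zero (last C)] @ D \<and> (D = [] \<or> fst (hd D) = Suc a + length C) \<and>
        split_segs (Suc a + length C) D = None" using Cons.IH[OF s] .
    then show ?thesis using e by auto
  qed
qed

lemma split_segs_append_Some: "split_segs (a + length X) Y = Some (C, D) \<Longrightarrow> split_segs a (X @ Y) = Some (X @ C, D)"
proof (induction X arbitrary: a)
  case Nil then show ?case by simp
next
  case (Cons x X)
  have "split_segs (Suc a) (X @ Y) = Some (X @ C, D)" using Cons.IH[of "Suc a"] Cons.prems by simp
  then show ?case by simp
qed

text \<open>None encodes the empty sequence.\<close>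

fun valid_opt :: "seg list option \<Rightarrow> bool" where
  "valid_opt None = True" | "valid_opt (Some L) = valid_segs L"

definition segs_size :: "seg list \<Rightarrow> nat" where "segs_size L = length (decode L)"

fun opt_size :: "seg list option \<Rightarrow> nat" where
  "opt_size None = 0" | "opt_size (Some L) = segs_size L"

fun opt_asc :: "seg list option \<Rightarrow> nat" where
  "opt_asc None = 0" | "opt_asc (Some L) = segs_asc L"

fun opt_rlm :: "seg list option \<Rightarrow> nat" where
  "opt_rlm None = 0" | "opt_rlm (Some L) = segs_rlm L"

definition zerofree_suffix :: "seg list \<Rightarrow> nat" where
  "zerofree_suffix S = length (takeWhile (\<lambda>y. y = 0) (rev (map (\<lambda>x. snd (snd x)) S)))"

lemma zerofree_suffix_shift_repeats: "zerofree_suffix (shift_repeats v s S) = Suc (zerofree_suffix S)"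
  unfolding zerofree_suffix_def zeros_shift_repeats by simp

lemma zerofree_suffix_raise[simp]: "zerofree_suffix (map (raise m) S) = zerofree_suffix S"
  unfolding zerofree_suffix_def by (simp add: comp_def)

lemma segs_rlm_append_has_zeros:
  assumes "\<forall>x\<in>set Y. 0 < fst x" "has_zeros y"
  shows "segs_rlm (X @ y # Y) = Suc (zerofree_suffix Y)"
proof -
  have e: "takeWhile (\<lambda>x. \<not> has_zeros x) (rev Y) = takeWhile (\<lambda>x. snd (snd x) = 0) (rev Y)"
    by (rule takeWhile_cong) (use assms in \<open>auto simp: has_zeros_iff\<close>)
  have r: "rev (X @ y # Y) = rev Y @ y # rev X" by simp
  have "takeWhile (\<lambda>x. \<not> has_zeros x) (rev Y @ y # rev X) = takeWhile (\<lambda>x. \<not> has_zeros x) (rev Y)"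
  proof (cases "\<forall>x\<in>set (rev Y). \<not> has_zeros x")
    case True
    have "takeWhile (\<lambda>x. \<not> has_zeros x) (rev Y @ y # rev X) = rev Y @ takeWhile (\<lambda>x. \<not> has_zeros x) (y # rev X)"
      by (intro takeWhile_append2) (use True in auto)
    also have "\<dots> = rev Y" using assms by simp
    also have "\<dots> = takeWhile (\<lambda>x. \<not> has_zeros x) (rev Y)"
      by (rule sym, subst takeWhile_eq_all_conv) (use True in auto)
    finally show ?thesis .
  next
    case False
    then obtain x where "x \<in> set (rev Y)" "has_zeros x" by auto
    then show ?thesis by (intro takeWhile_append1) auto
  qed
  moreover have "length (takeWhile (\<lambda>x. snd (snd x) = 0) (rev Y)) = zerofree_suffix Y"
    unfolding zerofree_suffix_def rev_map takeWhile_map by (simp add: comp_def)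
  ultimately show ?thesis unfolding segs_rlm_def r using e by simp
qed

lemma segs_rlm_zerofree_suffix:
  assumes "\<forall>x\<in>set S. 0 < fst x"
  shows "segs_rlm ((0,0,t0) # S) = Suc (zerofree_suffix S)"
  using segs_rlm_append_has_zeros[of S "(0,0,t0)" "[]"] assms by simp

definition prime_segs :: "seg list option \<Rightarrow> seg list" where
  "prime_segs P = (case P of None \<Rightarrow> [(0,0,0)] | Some L \<Rightarrow> (0,0,0) # shift_repeats 1 (snd (snd (hd L))) (tl L))"

lemma prime_segs_props:
  assumes "valid_opt P"
  shows "valid_segs (prime_segs P) \<and> split_segs 0 (prime_segs P) = None \<and> segs_size (prime_segs P) = Suc (opt_size P) \<and>
    segs_asc (prime_segs P) = opt_asc P + (if P = None then 0 else 1) \<and> segs_rlm (prime_segs P) = Suc (opt_rlm P)"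
proof (cases P)
  case None then show ?thesis by (simp add: prime_segs_def segs_size_def segs_asc_def segs_rlm_def)
next
  case (Some L)
  then have "valid_segs L" using assms by simp
  then obtain t0 S where L: "L = (0,0,t0) # S" "segs_ok 0 0 (0 < t0) S" using valid_segsE by blast
  have pos: "\<forall>x\<in>set S. 0 < fst x" using L segs_ok_pos by auto
  have pe: "prime_segs P = (0,0,0) # shift_repeats 1 t0 S" using Some L by (simp add: prime_segs_def)
  have h: "S \<noteq> [] \<Longrightarrow> 1 \<le> fst (hd S)"
  proof -
    assume "S \<noteq> []"
    then have "hd S \<in> set S" by simp
    then have "0 < fst (hd S)" using pos by blast
    then show "1 \<le> fst (hd S)" by simp
  qed
  have v: "segs_ok 0 0 False (shift_repeats 1 t0 S)"
    by (rule segs_ok_shift_repeats[OF L(2)]) (use h in auto)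
  have ppos: "\<forall>x\<in>set (shift_repeats 1 t0 S). 0 < fst x"
  proof
    fix x assume "x \<in> set (shift_repeats 1 t0 S)"
    then show "0 < fst x" using shift_repeats_pos[OF L(2), of 1 x t0] by simp
  qed
  have "segs_rlm (prime_segs P) = Suc (zerofree_suffix (shift_repeats 1 t0 S))" unfolding pe by (rule segs_rlm_zerofree_suffix[OF ppos])
  also have "\<dots> = Suc (Suc (zerofree_suffix S))" by (simp add: zerofree_suffix_shift_repeats)
  also have "\<dots> = Suc (segs_rlm L)" using segs_rlm_zerofree_suffix[OF pos] L by simp
  finally have r: "segs_rlm (prime_segs P) = Suc (segs_rlm L)" .
  have sp: "split_segs 0 (prime_segs P) = None" unfolding pe using split_segs_shift_repeats[OF L(2)] by simp
  have sz: "segs_size (prime_segs P) = Suc (segs_size L)" unfolding pe L(1) segs_size_def using length_decode_shift_repeats by simp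
  have asc: "segs_asc (prime_segs P) = Suc (segs_asc L)" unfolding pe L(1) segs_asc_def
    using arg_cong[OF zeros_shift_repeats[of 1 t0 S], of length] by simp
  show ?thesis using Some v sp sz asc r pe by simp
qed

lemma prime_segsE:
  assumes v: "valid_segs p" and sp: "split_segs 0 p = None"
  obtains S where "p = (0,0,0) # S" "segs_ok 0 0 False S" "split_segs 1 S = None"
proof -
  obtain t0 S where p: "p = (0,0,t0) # S" "segs_ok 0 0 (0 < t0) S" using valid_segsE[OF v] by blast
  have s1: "split_segs 1 S = None" using sp p by (auto split: option.splits)
  have "S = [] \<or> fst (hd S) = 1" using p(2) by (cases S) auto
  then have "t0 = 0" using sp p s1 by (auto split: if_splits)
  then show thesis using that p s1 by auto
qed

lemma prime_segs_surj:
  assumes "valid_segs p" "split_segs 0 p = None"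
  shows "\<exists>P. valid_opt P \<and> p = prime_segs P"
proof -
  obtain S where p: "p = (0,0,0) # S" "segs_ok 0 0 False S" "split_segs 1 S = None" using prime_segsE[OF assms] by blast
  show ?thesis
  proof (cases "S = []")
    case True then show ?thesis using p by (intro exI[of _ None]) (simp add: prime_segs_def)
  next
    case False
    have h1: "fst (hd S) = 1" using p(2) False by (cases S) auto
    have lastt: "snd (snd (last S)) = 0"
    proof (rule ccontr)
      assume ne: "snd (snd (last S)) \<noteq> 0"
      have Sd: "S = butlast S @ [last S]" using False by simp
      have "split_segs (1 + length (butlast S)) [last S] = Some ([remove_zero (last S)], [])"
        using ne by simp
      then have "split_segs 1 (butlast S @ [last S]) = Some (butlast S @ [remove_zero (last S)], [])"
        by (rule split_segs_append_Some)
      then show False using p(3) Sd by simp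
    qed
    define L where "L = (0,0, fst (unshift_repeats S)) # snd (unshift_repeats S)"
    have "segs_ok 0 0 (0 < fst (unshift_repeats S)) (snd (unshift_repeats S))"
      by (rule segs_ok_unshift_repeats[OF p(2)]) (use p(3) False h1 in auto)
    then have vL: "valid_segs L" unfolding L_def by simp
    have "shift_repeats (fst (hd S)) (fst (unshift_repeats S)) (snd (unshift_repeats S)) = S" by (rule shift_unshift_repeats[OF p(2) False lastt])
    then have "p = prime_segs (Some L)" unfolding L_def prime_segs_def using p(1) h1 by simp
    then show ?thesis using vL by (intro exI[of _ "Some L"]) simp
  qed
qed

lemma prime_segs_inj:
  "valid_opt P1 \<Longrightarrow> valid_opt P2 \<Longrightarrow> prime_segs P1 = prime_segs P2 \<Longrightarrow> P1 = P2"
proof -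
  assume v: "valid_opt P1" "valid_opt P2" and e: "prime_segs P1 = prime_segs P2"
  show "P1 = P2"
  proof (cases P1)
    case None
    then show ?thesis using e by (cases P2) (auto simp: prime_segs_def)
  next
    case (Some L1)
    then obtain L2 where P2: "P2 = Some L2" using e by (cases P2) (auto simp: prime_segs_def)
    obtain t1 S1 where L1: "L1 = (0,0,t1) # S1" using v Some valid_segsE by fastforce
    obtain t2 S2 where L2: "L2 = (0,0,t2) # S2" using v P2 valid_segsE by fastforce
    have "shift_repeats 1 t1 S1 = shift_repeats 1 t2 S2" using e Some P2 L1 L2 by (simp add: prime_segs_def)
    then have "unshift_repeats (shift_repeats 1 t1 S1) = unshift_repeats (shift_repeats 1 t2 S2)" by simp
    then show ?thesis using Some P2 L1 L2 by (simp add: unshift_shift_repeats)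
  qed
qed

text \<open>
  In terms of sequences, join_segs A p is A, then 0, then the tail of p with its nonzero entries
  raised by the number of ascents of A.
\<close>

definition join_segs :: "seg list \<Rightarrow> seg list \<Rightarrow> seg list" where
  "join_segs A p = butlast A @ [add_zero (last A)] @ map (raise (length A - 1)) (tl p)"

lemma valid_join_segs:
  assumes A: "valid_segs A" and Sp: "segs_ok 0 0 False Sp"
  shows "valid_segs (join_segs A ((0,0,0) # Sp))"
proof -
  obtain a0 SA where A: "A = (0,0,a0) # SA" "segs_ok 0 0 (0 < a0) SA" using valid_segsE[OF A] by blast
  define m where "m = length SA"
  have join: "join_segs A ((0,0,0) # Sp) = butlast A @ [add_zero (last A)] @ map (raise m) Sp"
    unfolding join_segs_def m_def A(1) by simp
  have h1: "Sp \<noteq> [] \<Longrightarrow> fst (hd Sp) = 1" using Sp by (cases Sp) auto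
  show ?thesis
  proof (cases "SA = []")
    case True
    moreover have "segs_ok 0 0 True Sp" by (rule segs_ok_change_prev[OF Sp]) auto
    ultimately show ?thesis using join A by (simp add: m_def)
  next
    case False
    obtain v s t where lSA: "last SA = (v,s,t)" by (cases "last SA") auto
    have ok1: "segs_ok 0 0 (0 < a0) (butlast SA @ [add_zero (last SA)])"
      using A(2) False lSA segs_ok_last_cong[of 0 0 "0 < a0" "butlast SA" v s t s "Suc t"]
      by (metis add_zero.simps append_butlast_last_id)
    have "fst (last SA) \<le> m" using segs_ok_last_le[OF A(2) False] by (simp add: m_def)
    then have "segs_ok m (fst (last SA)) True (map (raise m) Sp)"
      by (intro segs_ok_change_prev[OF segs_ok_raise[OF Sp, of m, simplified]]) (use h1 in \<open>auto simp: hd_map\<close>)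
    then have "segs_ok 0 0 (0 < a0) ((butlast SA @ [add_zero (last SA)]) @ map (raise m) Sp)"
      using ok1 False by (subst segs_ok_append) (simp add: m_def)
    moreover have "butlast A @ [add_zero (last A)] = (0,0,a0) # (butlast SA @ [add_zero (last SA)])"
      using A False by simp
    ultimately show ?thesis using join by (metis append.assoc append_Cons valid_segs.simps(2))
  qed
qed

lemma join_segs_stats:
  assumes A: "valid_segs A" and Sp: "segs_ok 0 0 False Sp"
  defines "p \<equiv> (0,0,0) # Sp"
  shows "segs_size (join_segs A p) = segs_size A + segs_size p"
    and "segs_asc (join_segs A p) = segs_asc A + segs_asc p"
    and "segs_rlm (join_segs A p) = segs_rlm p"
proof -
  have "A \<noteq> []" using A by (cases A) auto
  then have "decode (butlast A @ [add_zero (last A)]) = decode A @ [0]"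
    using seg_word_add_zero by (metis append.assoc decode_append decode_Cons decode_Nil append_Nil2 append_butlast_last_id)
  from arg_cong[OF this, of length]
  show "segs_size (join_segs A p) = segs_size A + segs_size p"
    by (simp add: join_segs_def segs_size_def p_def)
  show "segs_asc (join_segs A p) = segs_asc A + segs_asc p"
    using \<open>A \<noteq> []\<close> by (simp add: join_segs_def segs_asc_def p_def)
  have pos: "\<forall>x\<in>set Sp. 0 < fst x" using Sp segs_ok_pos by auto
  have "segs_rlm (butlast A @ add_zero (last A) # map (raise (length A - 1)) Sp)
      = Suc (zerofree_suffix (map (raise (length A - 1)) Sp))"
    by (rule segs_rlm_append_has_zeros) (use pos in auto)
  then have "segs_rlm (join_segs A p) = Suc (zerofree_suffix (map (raise (length A - 1)) Sp))"
    by (simp add: join_segs_def p_def)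
  also have "\<dots> = segs_rlm p" unfolding p_def by (simp add: segs_rlm_zerofree_suffix[OF pos])
  finally show "segs_rlm (join_segs A p) = segs_rlm p" .
qed

lemma split_join_segs:
  assumes A: "valid_segs A" and Sp: "segs_ok 0 0 False Sp" "split_segs 1 Sp = None"
  shows "split_segs 0 (join_segs A ((0,0,0) # Sp)) = Some (A, map (raise (length A - 1)) Sp)"
proof -
  define m where "m = length A - 1"
  have "A \<noteq> []" using A by (cases A) auto
  have "split_segs (Suc m) (map (raise m) Sp) = None" using split_segs_raise[of 1 m Sp] Sp(2) by simp
  moreover have "Sp \<noteq> [] \<Longrightarrow> fst (hd Sp) = 1" using Sp(1) by (cases Sp) auto
  ultimately have "split_segs (0 + length (butlast A)) ([add_zero (last A)] @ map (raise m) Sp)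
      = Some ([last A], map (raise m) Sp)"
    using \<open>A \<noteq> []\<close> by (cases Sp) (auto simp: hd_map m_def)
  then have "split_segs 0 (butlast A @ [add_zero (last A)] @ map (raise m) Sp) = Some (butlast A @ [last A], map (raise m) Sp)"
    by (rule split_segs_append_Some)
  then show ?thesis using \<open>A \<noteq> []\<close> by (simp add: join_segs_def m_def)
qed

lemma valid_split_segs_prefix:
  assumes vL: "valid_segs L" and sp: "split_segs 0 L = Some (A, B)"
  shows "valid_segs A"
proof -
  have S: "A \<noteq> []" "L = butlast A @ [add_zero (last A)] @ B" using split_segs_Some[OF sp] by auto
  obtain t0 S where L: "L = (0,0,t0) # S" "segs_ok 0 0 (0 < t0) S" using valid_segsE[OF vL] by blast
  show ?thesis
  proof (cases "butlast A = []")
    case True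
    then have "A = [last A]" using S(1) by (metis append_butlast_last_id append_Nil)
    moreover have "add_zero (last A) = (0,0,t0)" using True S(2) L(1) by simp
    ultimately show ?thesis by (cases "last A") (metis add_zero.simps prod.inject valid_segs.simps(2) segs_ok.simps(1))
  next
    case False
    then obtain C where bA: "butlast A = (0,0,t0) # C" using S(2) L(1) by (cases "butlast A") auto
    have SC: "S = (C @ [add_zero (last A)]) @ B" using S(2) L(1) bA by simp
    have okC: "segs_ok 0 0 (0 < t0) (C @ [add_zero (last A)])" using L(2) SC segs_ok_append by blast
    obtain v s t where la: "last A = (v,s,t)" by (cases "last A") auto
    have "segs_ok 0 0 (0 < t0) (C @ [last A])" using okC la segs_ok_last_cong[of 0 0 "0 < t0" C v s "Suc t" s t] by simp
    then have "valid_segs ((0,0,t0) # (C @ [last A]))" by simp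
    moreover have "A = (0,0,t0) # (C @ [last A])" using bA S(1) by (metis append_butlast_last_id append_Cons)
    ultimately show ?thesis by metis
  qed
qed

lemma segs_ok_split_suffix:
  assumes vL: "valid_segs L" and sp: "split_segs 0 L = Some (A, B)"
  shows "segs_ok (length A - 1) (length A - 1) False B"
proof -
  have S: "A \<noteq> []" "L = butlast A @ [add_zero (last A)] @ B" "B = [] \<or> fst (hd B) = length A"
    using split_segs_Some[OF sp] by auto
  obtain t0 S where L: "L = (0,0,t0) # S" "segs_ok 0 0 (0 < t0) S" using valid_segsE[OF vL] by blast
  define X where "X = tl (butlast A @ [add_zero (last A)])"
  have "S = X @ B" unfolding X_def using S(2) L(1)
    by (metis list.sel(3) append_assoc append_is_Nil_conv list.distinct(1) tl_append2)
  moreover have lX: "length X = length A - 1" using S(1) by (simp add: X_def)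
  ultimately have ok: "segs_ok (length A - 1) (if X = [] then 0 else fst (last X))
       (if X = [] then 0 < t0 else 0 < snd (snd (last X))) B"
    using L(2) segs_ok_append by (metis add_0)
  have "if X = [] then 0 < t0 else 0 < snd (snd (last X))"
  proof (cases "X = []")
    case True
    then have "butlast A = []" unfolding X_def by (cases "butlast A") auto
    then have "add_zero (last A) = (0,0,t0)" using S(2) L(1) by simp
    then show ?thesis using True zeros_add_zero[of "last A"] by simp
  next
    case False
    then have "last X = add_zero (last A)" unfolding X_def by (metis last_snoc last_tl)
    then show ?thesis using False by simp
  qed
  then show ?thesis
    by (intro segs_ok_change_prev[OF ok]) (use S(3) S(1) in \<open>auto split: if_splits\<close>)
qed

lemma split_segs_join:
  assumes vL: "valid_segs L" and sp: "split_segs 0 L = Some (A, B)"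
  defines "B' \<equiv> map (lower (length A - 1)) B"
  shows "valid_segs ((0,0,0) # B') \<and> split_segs 0 ((0,0,0) # B') = None \<and> L = join_segs A ((0,0,0) # B')"
proof -
  have S: "A \<noteq> []" "L = butlast A @ [add_zero (last A)] @ B" "B = [] \<or> fst (hd B) = length A"
    "split_segs (length A) B = None" using split_segs_Some[OF sp] by auto
  define m where "m = length A - 1"
  have okB: "segs_ok m m False B" unfolding m_def by (rule segs_ok_split_suffix[OF vL sp])
  have geB: "\<forall>x\<in>set B. m < fst x"
  proof
    fix x assume x: "x \<in> set B"
    then have "fst (hd B) \<le> fst x" using segs_ok_hd_le[OF okB] by simp
    moreover have "fst (hd B) = m + 1" using S(3) x S(1) m_def by auto
    ultimately show "m < fst x" by simp
  qed
  have BB: "map (raise m) B' = B" unfolding B'_def m_def[symmetric] using geB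
    by (induction B) (auto simp: raise_lower)
  have "\<forall>x\<in>set B'. 0 < fst x" unfolding B'_def m_def[symmetric] using geB
    by (auto simp: lower.simps split: prod.splits)
  then have "segs_ok 0 0 False B'"
    by (intro segs_ok_lower[of 0 m 0 False B']) (use okB BB in auto)
  moreover have "split_segs 1 B' = None"
    using split_segs_raise[of 1 m B'] S(1,4) BB by (simp add: m_def)
  moreover have "L = join_segs A ((0,0,0) # B')" unfolding join_segs_def using S(2) BB m_def by simp
  ultimately show ?thesis by simp
qed

definition compose_segs :: "seg list option \<Rightarrow> seg list option \<Rightarrow> seg list" where
  "compose_segs Q P = (case Q of None \<Rightarrow> prime_segs P | Some A \<Rightarrow> join_segs A (prime_segs P))"

lemma compose_segs_props:
  assumes "valid_opt Q" "valid_opt P"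
  shows "valid_segs (compose_segs Q P) \<and> segs_size (compose_segs Q P) = opt_size Q + Suc (opt_size P) \<and>
    segs_asc (compose_segs Q P) = opt_asc Q + opt_asc P + (if P = None then 0 else 1) \<and>
    segs_rlm (compose_segs Q P) = Suc (opt_rlm P)"
proof -
  have pp: "valid_segs (prime_segs P) \<and> split_segs 0 (prime_segs P) = None \<and> segs_size (prime_segs P) = Suc (opt_size P) \<and>
    segs_asc (prime_segs P) = opt_asc P + (if P = None then 0 else 1) \<and> segs_rlm (prime_segs P) = Suc (opt_rlm P)"
    using prime_segs_props[OF assms(2)] by simp
  then obtain Sp where Sp: "prime_segs P = (0,0,0) # Sp" "segs_ok 0 0 False Sp"
    using prime_segsE by blast
  show ?thesis
  proof (cases Q)
    case None
    then show ?thesis using pp by (simp add: compose_segs_def)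
  next
    case (Some A)
    then have "valid_segs A" using assms by simp
    then show ?thesis
      using valid_join_segs join_segs_stats[of A Sp] pp Some Sp by (simp add: compose_segs_def)
  qed
qed

lemma split_compose_segs:
  assumes "valid_opt Q" "valid_opt P"
  shows "split_segs 0 (compose_segs Q P) =
    (case Q of None \<Rightarrow> None | Some A \<Rightarrow> Some (A, map (raise (length A - 1)) (tl (prime_segs P))))"
proof -
  have "valid_segs (prime_segs P)" "split_segs 0 (prime_segs P) = None"
    using prime_segs_props[OF assms(2)] by auto
  then obtain Sp where Sp: "prime_segs P = (0,0,0) # Sp" "segs_ok 0 0 False Sp" "split_segs 1 Sp = None"
    using prime_segsE by blast
  show ?thesis
  proof (cases Q)
    case None
    then show ?thesis using \<open>split_segs 0 (prime_segs P) = None\<close> by (simp add: compose_segs_def)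
  next
    case (Some A)
    then have "valid_segs A" using assms by simp
    then show ?thesis using split_join_segs[OF _ Sp(2,3)] Some Sp(1) by (simp add: compose_segs_def)
  qed
qed

lemma compose_segs_inj:
  assumes "valid_opt Q1" "valid_opt P1" "valid_opt Q2" "valid_opt P2"
    and eq: "compose_segs Q1 P1 = compose_segs Q2 P2"
  shows "Q1 = Q2 \<and> P1 = P2"
proof -
  have split: "(case Q1 of None \<Rightarrow> None | Some A \<Rightarrow> Some (A, map (raise (length A - 1)) (tl (prime_segs P1)))) =
           (case Q2 of None \<Rightarrow> None | Some A \<Rightarrow> Some (A, map (raise (length A - 1)) (tl (prime_segs P2))))"
    using split_compose_segs[OF assms(1,2)] split_compose_segs[OF assms(3,4)] eq by simp
  have hd: "hd (prime_segs P1) = (0,0,0)" "hd (prime_segs P2) = (0,0,0)"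
    by (simp_all add: prime_segs_def split: option.splits)
  have ne: "prime_segs P1 \<noteq> []" "prime_segs P2 \<noteq> []" by (auto simp: prime_segs_def split: option.splits)
  have "Q1 = Q2 \<and> prime_segs P1 = prime_segs P2"
  proof (cases Q1)
    case None
    then show ?thesis using split eq by (cases Q2) (auto simp: compose_segs_def)
  next
    case (Some A)
    then obtain A2 where "Q2 = Some A2" "A = A2"
      "map (raise (length A - 1)) (tl (prime_segs P1)) = map (raise (length A - 1)) (tl (prime_segs P2))"
      using split by (cases Q2) auto
    moreover from this have "tl (prime_segs P1) = tl (prime_segs P2)"
      by (metis (no_types) map_map lower_raise comp_def map_idI)
    ultimately show ?thesis using Some hd ne by (metis list.collapse)
  qed
  then show ?thesis using prime_segs_inj assms(2,4) by blast
qed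

lemma compose_segs_surj:
  assumes "valid_segs L"
  obtains Q P where "valid_opt Q" "valid_opt P" "L = compose_segs Q P"
proof (cases "split_segs 0 L")
  case None
  then obtain P where "valid_opt P" "L = prime_segs P" using prime_segs_surj[OF assms] by blast
  then show thesis using that[of None P] by (simp add: compose_segs_def)
next
  case (Some AB)
  then obtain A B where s: "split_segs 0 L = Some (A, B)" by (cases AB) auto
  define p where "p = (0,0,0) # map (lower (length A - 1)) B"
  have d: "valid_segs A" "valid_segs p" "split_segs 0 p = None" "L = join_segs A p"
    using valid_split_segs_prefix[OF assms s] split_segs_join[OF assms s] unfolding p_def by auto
  obtain P where "valid_opt P" "p = prime_segs P" using prime_segs_surj[OF d(2,3)] by blast
  then show thesis using d that[of "Some A" P] by (simp add: compose_segs_def)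
qed

section \<open>Binary trees\<close>

datatype bintree = Leaf | Node bintree bintree

fun tsize :: "bintree \<Rightarrow> nat" where
  "tsize Leaf = 0"
| "tsize (Node l r) = tsize l + tsize r + 1"

fun tasc :: "bintree \<Rightarrow> nat" where
  "tasc Leaf = 0"
| "tasc (Node l r) = tasc l + tasc r + (if r = Leaf then 0 else 1)"

fun trlm :: "bintree \<Rightarrow> nat" where
  "trlm Leaf = 0"
| "trlm (Node l r) = trlm r + 1"

lemma tsize_eq_0_iff: "tsize t = 0 \<longleftrightarrow> t = Leaf"
  by (cases t) auto

fun perm_of :: "bintree \<Rightarrow> nat list" where
  "perm_of Leaf = []"
| "perm_of (Node l r) = compose_perm (perm_of l) (perm_of r)"

lemma perm_of_props:
  "perm_of t \<in> perms_avoid_132 (tsize t) \<and> asc (perm_of t) = tasc t \<and> rlm (perm_of t) = trlm t"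
proof (induction t)
  case Leaf
  then show ?case by (simp add: perms_avoid_132_def perms_def contains_132_def)
next
  case (Node l r)
  then have l: "perm_of l \<in> perms (tsize l)" "\<not> contains_132 (perm_of l)"
    and r: "perm_of r \<in> perms (tsize r)" "\<not> contains_132 (perm_of r)"
    and r_Nil: "perm_of r = [] \<longleftrightarrow> r = Leaf"
    by (auto simp: perms_avoid_132_def perms_def tsize_eq_0_iff)
  have "perm_of (Node l r) \<in> perms (tsize (Node l r))"
    using compose_perm_perms[OF l(1) r(1)] by simp
  moreover have "\<not> contains_132 (perm_of (Node l r))"
    using compose_perm_avoids[OF l(1) r(1) l(2) r(2)] by simp
  ultimately show ?case
    using Node.IH asc_compose_perm[OF r(1)] rlm_compose_perm[OF r(1)] r_Nil
    by (simp add: perms_avoid_132_def)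
qed

lemma perm_of_inject: "perm_of t = perm_of u \<Longrightarrow> t = u"
proof (induction t arbitrary: u)
  case Leaf
  then show ?case by (cases u) (auto simp: compose_perm_def)
next
  case (Node l r)
  then show ?case
  proof (cases u)
    case Leaf
    then show ?thesis using Node.prems by (simp add: compose_perm_def)
  next
    case u: (Node l' r')
    have "perm_of l = perm_of l' \<and> perm_of r = perm_of r'"
      using Node.prems u by (intro compose_perm_inject) simp
    then show ?thesis using Node.IH u by simp
  qed
qed

lemma perm_of_surj: "p \<in> perms_avoid_132 n \<Longrightarrow> \<exists>t. p = perm_of t"
proof (induction n arbitrary: p rule: less_induct)
  case (less n)
  show ?case
  proof (cases n)
    case 0
    then have "p = []" using less.prems by (simp add: perms_avoid_132_def perms_def)
    then show ?thesis by (metis perm_of.simps(1))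
  next
    case (Suc m)
    then have "p \<in> perms (Suc m)" "\<not> contains_132 p"
      using less.prems by (auto simp: perms_avoid_132_def)
    then obtain q p' where "q \<in> perms (length q)" "p' \<in> perms (length p')" "length q + length p' = m"
      "\<not> contains_132 q" "\<not> contains_132 p'" "p = compose_perm q p'"
      by (rule compose_perm_surj)
    moreover from this have "q \<in> perms_avoid_132 (length q)" "p' \<in> perms_avoid_132 (length p')"
      "length q < n" "length p' < n"
      using Suc by (auto simp: perms_avoid_132_def)
    then obtain l r where "q = perm_of l" "p' = perm_of r" using less.IH by blast
    ultimately show ?thesis by (metis perm_of.simps(2))
  qed
qed

lemma bij_betw_perm_of: "bij_betw perm_of {t. tsize t = n} (perms_avoid_132 n)"
proof -
  have "perms_avoid_132 n \<subseteq> perm_of ` {t. tsize t = n}"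
  proof
    fix p assume p: "p \<in> perms_avoid_132 n"
    then obtain t where "p = perm_of t" using perm_of_surj by blast
    moreover have "length (perm_of t) = tsize t"
      using perm_of_props by (simp add: perms_avoid_132_def perms_def)
    moreover have "length p = n" using p by (simp add: perms_avoid_132_def perms_def)
    ultimately show "p \<in> perm_of ` {t. tsize t = n}" by auto
  qed
  moreover have "perm_of ` {t. tsize t = n} \<subseteq> perms_avoid_132 n"
    using perm_of_props by auto
  moreover have "inj perm_of" by (rule injI) (rule perm_of_inject)
  ultimately show ?thesis by (auto simp: bij_betw_def intro: inj_on_subset)
qed

fun segs_of :: "bintree \<Rightarrow> seg list option" where
  "segs_of Leaf = None"
| "segs_of (Node l r) = Some (compose_segs (segs_of l) (segs_of r))"

lemma segs_of_eq_None_iff: "segs_of t = None \<longleftrightarrow> t = Leaf"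
  by (cases t) auto

lemma segs_of_props:
  "valid_opt (segs_of t) \<and> opt_size (segs_of t) = tsize t \<and>
   opt_asc (segs_of t) = tasc t \<and> opt_rlm (segs_of t) = trlm t"
proof (induction t)
  case (Node l r)
  then show ?case
    using compose_segs_props[of "segs_of l" "segs_of r"] by (simp add: segs_of_eq_None_iff)
qed simp

lemma segs_of_inject: "segs_of t = segs_of u \<Longrightarrow> t = u"
proof (induction t arbitrary: u)
  case Leaf
  then show ?case using segs_of_eq_None_iff by metis
next
  case (Node l r)
  then obtain l' r' where u: "u = Node l' r'" by (cases u) auto
  have "segs_of l = segs_of l' \<and> segs_of r = segs_of r'"
    using Node.prems u segs_of_props by (intro compose_segs_inj) auto
  then show ?case using Node.IH u by simp
qed

lemma segs_of_surj: "valid_opt Q \<Longrightarrow> \<exists>t. segs_of t = Q"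
proof (induction "opt_size Q" arbitrary: Q rule: less_induct)
  case less
  show ?case
  proof (cases Q)
    case None
    then show ?thesis using segs_of.simps(1) by blast
  next
    case (Some L)
    then have "valid_segs L" using less.prems by simp
    then obtain Q' P where QP: "valid_opt Q'" "valid_opt P" "L = compose_segs Q' P"
      by (rule compose_segs_surj)
    then have "opt_size Q' < opt_size Q" "opt_size P < opt_size Q"
      using compose_segs_props[OF QP(1,2)] Some by auto
    then obtain l r where "segs_of l = Q'" "segs_of r = P" using less.hyps QP by metis
    then show ?thesis using Some QP by (metis segs_of.simps(2))
  qed
qed

definition seq_of :: "bintree \<Rightarrow> nat list" where
  "seq_of t = (case segs_of t of None \<Rightarrow> [] | Some L \<Rightarrow> decode L)"

lemma seq_of_props:
  "seq_of t \<in> ascent_seqs_avoid_021 (tsize t) \<and> asc (seq_of t) = tasc t \<and> rlm (seq_of t) = trlm t"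
proof (cases "segs_of t")
  case None
  then show ?thesis
    using segs_of_props[of t] by (simp add: seq_of_def ascent_seqs_avoid_021_eq asc_seq_021_Nil)
next
  case (Some L)
  then show ?thesis
    using segs_of_props[of t] valid_segs_decode[of L]
    by (simp add: seq_of_def ascent_seqs_avoid_021_eq segs_size_def)
qed

lemma seq_of_eq_Nil_iff: "seq_of t = [] \<longleftrightarrow> t = Leaf"
  using segs_of_props[of t] valid_segs_decode segs_of_eq_None_iff
  by (cases "segs_of t") (auto simp: seq_of_def)

lemma seq_of_inject: "seq_of t = seq_of u \<Longrightarrow> t = u"
proof (cases "t = Leaf \<or> u = Leaf")
  case True
  assume "seq_of t = seq_of u"
  then show ?thesis using True seq_of_eq_Nil_iff by metis
next
  case False
  then obtain L M where L: "segs_of t = Some L" and M: "segs_of u = Some M"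
    using segs_of_eq_None_iff by fastforce
  assume "seq_of t = seq_of u"
  then have "decode L = decode M" using L M by (simp add: seq_of_def)
  moreover have "valid_segs L" "valid_segs M"
    using L M segs_of_props[of t] segs_of_props[of u] by auto
  ultimately have "segs_of t = segs_of u" using L M encode_decode by metis
  then show ?thesis by (rule segs_of_inject)
qed

lemma seq_of_surj: "x \<in> ascent_seqs_avoid_021 n \<Longrightarrow> \<exists>t. x = seq_of t"
proof (cases "x = []")
  case True
  then show ?thesis by (metis option.simps(4) segs_of.simps(1) seq_of_def)
next
  case False
  assume "x \<in> ascent_seqs_avoid_021 n"
  then have "valid_segs (encode x)" "decode (encode x) = x"
    using decode_encode False by (auto simp: ascent_seqs_avoid_021_eq)
  moreover obtain t where "segs_of t = Some (encode x)"
    using segs_of_surj calculation(1) by (metis valid_opt.simps(2))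
  ultimately show ?thesis by (metis option.simps(5) seq_of_def)
qed

lemma bij_betw_seq_of: "bij_betw seq_of {t. tsize t = n} (ascent_seqs_avoid_021 n)"
proof -
  have "ascent_seqs_avoid_021 n \<subseteq> seq_of ` {t. tsize t = n}"
  proof
    fix x assume x: "x \<in> ascent_seqs_avoid_021 n"
    then obtain t where "x = seq_of t" using seq_of_surj by blast
    moreover have "length (seq_of t) = tsize t" "length x = n"
      using seq_of_props[of t] x by (auto simp: ascent_seqs_avoid_021_def)
    ultimately show "x \<in> seq_of ` {t. tsize t = n}" by auto
  qed
  moreover have "seq_of ` {t. tsize t = n} \<subseteq> ascent_seqs_avoid_021 n"
    using seq_of_props by auto
  moreover have "inj seq_of" by (rule injI) (rule seq_of_inject)
  ultimately show ?thesis by (auto simp: bij_betw_def intro: inj_on_subset)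
qed

theorem mainTheorem1:
  fixes n a r :: nat
  shows "card {x \<in> ascent_seqs_avoid_021 n. asc x = a \<and> rlm x = r}
       = card {p \<in> perms_avoid_132 n. asc p = a \<and> rlm p = r}"
proof -
  let ?stats = "\<lambda>x. asc x = a \<and> rlm x = r"
  have "card {x \<in> ascent_seqs_avoid_021 n. ?stats x} = card {t \<in> {t. tsize t = n}. ?stats (seq_of t)}"
    by (rule card_Collect_bij_betw[OF bij_betw_seq_of, symmetric])
  also have "\<dots> = card {t \<in> {t. tsize t = n}. tasc t = a \<and> trlm t = r}"
    by (simp add: seq_of_props)
  also have "\<dots> = card {t \<in> {t. tsize t = n}. ?stats (perm_of t)}"
    by (simp add: perm_of_props)
  also have "\<dots> = card {p \<in> perms_avoid_132 n. ?stats p}"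
    by (rule card_Collect_bij_betw[OF bij_betw_perm_of])
  finally show ?thesis .
qed

end
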